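(* Let $(M,F)$ be a conic pseudo-Finsler surface which is Landsberg, and let $f$ be a smooth $h(0)$ function on $\mathcal A$. If $f$ is horizontally constant, then $f_{;2}$ and $f_{;2;2}$ are horizontally constant.
   Context: Throughout, $M$ is a smooth $2$-dimensional manifold, $TM_0$ its slit tangent bundle with induced local coordinates $(x^i,y^i)$, $\partial_i=\partial/\partial x^i$, $\dot\partial_i=\partial/\partial y^i$. A function is called $h(r)$ if it is positively homogeneous of degree $r$ in $y$. A conic pseudo-Finsler surface $(M,F)$ consists of a conic subbundle $\mathcal A\subset TM_0$ (an open set invariant under $y\mapsto\lambda y$, $\lambda>0$, projecting onto $M$) and a smooth $h(1)$ function $F:\mathcal A\to\mathbb R$ such that $g_{ij}=\frac12\dot\partial_i\dot\partial_jF^2$ is nondegenerate. Put $\ell_i=\dot\partial_iF$, $\ell^i=y^i/F$. Modified Berwald frame: $\varepsilon\in\{1,-1\}$ and a covector $m_i$ satisfy $g_{ij}=\ell_i\ell_j+\varepsilon m_im_j$, $m^i=g^{ij}m_j$, so $\ell^i\ell_i=1$, $\ell^im_i=0$, $m^im_i=\varepsilon$. The main scalar $\mathcal I$ ($h(0)$) is defined by $FC_{ijk}=\mathcal I\,m_im_jm_k$, where $C_{ijk}=\frac14\dot\partial_i\dot\partial_j\dot\partial_kF^2$. The geodesic spray of $F$ is $S=y^i\partial_i-2G^i\dot\partial_i$; $G^i_j=\dot\partial_jG^i$, $\delta_i=\partial_i-G^j_i\dot\partial_j$. For a smooth function $f$: $f_{;1}=y^i\dot\partial_if$, $f_{;2}=\varepsilon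 Fm^i\dot\partial_if$, $f_{,1}=\ell^i\delta_if$, $f_{,2}=\varepsilon m^i\delta_if$; iterated derivatives are read left to right, e.g. $f_{;2;2}=(f_{;2})_{;2}$. $f$ is horizontally constant if $\delta_if=0$ (i.e. $f_{,1}=f_{,2}=0$). $F$ is Landsberg if $\mathcal I_{,1}=0$. *)

theory Defs
  imports "HOL-Analysis.Analysis"
begin

text \<open>The base manifold is (a chart domain) in R^2,
  points of TM are pairs (x,y) with x, y :: real^2; functions on TM_0 are
  curried functions real^2 => real^2 => real, considered on a conic set A.\<close>

type_synonym fn = "real^2 \<Rightarrow> real^2 \<Rightarrow> real"

definition dx :: "2 \<Rightarrow> fn \<Rightarrow> fn" where
  "dx i f = (\<lambda>x y. deriv (\<lambda>t. f (x + t *\<^sub>R axis i 1) y) 0)"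

definition dy :: "2 \<Rightarrow> fn \<Rightarrow> fn" where
  "dy i f = (\<lambda>x y. deriv (\<lambda>t. f x (y + t *\<^sub>R axis i 1)) 0)"

definition pdir :: "bool \<times> 2 \<Rightarrow> fn \<Rightarrow> fn" where
  "pdir d f = (if fst d then dy (snd d) f else dx (snd d) f)"

definition smooth_on_TM :: "((real^2) \<times> (real^2)) set \<Rightarrow> fn \<Rightarrow> bool" where
  "smooth_on_TM A f \<longleftrightarrow>
     (\<forall>ds p. p \<in> A \<longrightarrow> (\<lambda>q. foldr pdir ds f (fst q) (snd q)) differentiable (at p))"

definition conic_subbundle :: "((real^2) \<times> (real^2)) set \<Rightarrow> bool" where
  "conic_subbundle A \<longleftrightarrow> open A \<and> (\<forall>(x,y)\<in>A. y \<noteq> 0) \<and>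
     (\<forall>(x,y)\<in>A. \<forall>c::real. c > 0 \<longrightarrow> (x, c *\<^sub>R y) \<in> A)"

definition homog :: "real \<Rightarrow> ((real^2) \<times> (real^2)) set \<Rightarrow> fn \<Rightarrow> bool" where
  "homog r A f \<longleftrightarrow> (\<forall>(x,y)\<in>A. \<forall>c::real. c > 0 \<longrightarrow> f x (c *\<^sub>R y) = c powr r * f x y)"

definition sqF :: "fn \<Rightarrow> fn" where
  "sqF F = (\<lambda>x y. (F x y)^2)"

definition gmet :: "fn \<Rightarrow> 2 \<Rightarrow> 2 \<Rightarrow> fn" where
  "gmet F i j = (\<lambda>x y. (1/2) * dy i (dy j (sqF F)) x y)"

definition gmat :: "fn \<Rightarrow> real^2 \<Rightarrow> real^2 \<Rightarrow> real^2^2" where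
  "gmat F x y = (\<chi> i j. gmet F i j x y)"

definition ginv :: "fn \<Rightarrow> 2 \<Rightarrow> 2 \<Rightarrow> fn" where
  "ginv F i j = (\<lambda>x y. matrix_inv (gmat F x y) $ i $ j)"

definition cartan :: "fn \<Rightarrow> 2 \<Rightarrow> 2 \<Rightarrow> 2 \<Rightarrow> fn" where
  "cartan F i j k = (\<lambda>x y. (1/4) * dy i (dy j (dy k (sqF F))) x y)"

definition conic_pseudo_finsler_surface :: "((real^2) \<times> (real^2)) set \<Rightarrow> fn \<Rightarrow> bool" where
  "conic_pseudo_finsler_surface A F \<longleftrightarrow> conic_subbundle A \<and> smooth_on_TM A F \<and> homog 1 A F \<and>
     (\<forall>(x,y)\<in>A. det (gmat F x y) \<noteq> 0)"

definition ell_low :: "fn \<Rightarrow> 2 \<Rightarrow> fn" where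
  "ell_low F i = dy i F"

definition ell_up :: "fn \<Rightarrow> 2 \<Rightarrow> fn" where
  "ell_up F i = (\<lambda>x y. y $ i / F x y)"

definition m_up :: "fn \<Rightarrow> (2 \<Rightarrow> fn) \<Rightarrow> 2 \<Rightarrow> fn" where
  "m_up F m i = (\<lambda>x y. \<Sum>j\<in>UNIV. ginv F i j x y * m j x y)"

definition berwald_frame :: "((real^2) \<times> (real^2)) set \<Rightarrow> fn \<Rightarrow> real \<Rightarrow> (2 \<Rightarrow> fn) \<Rightarrow> bool" where
  "berwald_frame A F eps m \<longleftrightarrow> (eps = 1 \<or> eps = -1) \<and> (\<forall>i. smooth_on_TM A (m i)) \<and>
     (\<forall>(x,y)\<in>A. \<forall>i j. gmet F i j x y = ell_low F i x y * ell_low F j x y + eps * m i x y * m j x y)"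

definition is_main_scalar :: "((real^2) \<times> (real^2)) set \<Rightarrow> fn \<Rightarrow> (2 \<Rightarrow> fn) \<Rightarrow> fn \<Rightarrow> bool" where
  "is_main_scalar A F m I \<longleftrightarrow>
     (\<forall>(x,y)\<in>A. \<forall>i j k. F x y * cartan F i j k x y = I x y * m i x y * m j x y * m k x y)"

text \<open>Geodesic spray coefficients G^i = 1/4 g^ik (y^j dot-d_k d_j F^2 - d_k F^2),
  so that S = y^i d_i - 2 G^i dot-d_i is the geodesic spray.\<close>
definition Gspray :: "fn \<Rightarrow> 2 \<Rightarrow> fn" where
  "Gspray F i = (\<lambda>x y. (1/4) * (\<Sum>k\<in>UNIV. ginv F i k x y *
      ((\<Sum>j\<in>UNIV. y $ j * dy k (dx j (sqF F)) x y) - dx k (sqF F) x y)))"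

definition Gconn :: "fn \<Rightarrow> 2 \<Rightarrow> 2 \<Rightarrow> fn" where
  "Gconn F i j = dy j (Gspray F i)"

definition hdelta :: "fn \<Rightarrow> 2 \<Rightarrow> fn \<Rightarrow> fn" where
  "hdelta F i f = (\<lambda>x y. dx i f x y - (\<Sum>j\<in>UNIV. Gconn F j i x y * dy j f x y))"

definition vd2 :: "fn \<Rightarrow> real \<Rightarrow> (2 \<Rightarrow> fn) \<Rightarrow> fn \<Rightarrow> fn" where
  "vd2 F eps m f = (\<lambda>x y. eps * F x y * (\<Sum>i\<in>UNIV. m_up F m i x y * dy i f x y))"

definition hd1 :: "fn \<Rightarrow> fn \<Rightarrow> fn" where
  "hd1 F f = (\<lambda>x y. \<Sum>i\<in>UNIV. ell_up F i x y * hdelta F i f x y)"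

definition hd2 :: "fn \<Rightarrow> real \<Rightarrow> (2 \<Rightarrow> fn) \<Rightarrow> fn \<Rightarrow> fn" where
  "hd2 F eps m f = (\<lambda>x y. eps * (\<Sum>i\<in>UNIV. m_up F m i x y * hdelta F i f x y))"

definition horiz_const :: "((real^2) \<times> (real^2)) set \<Rightarrow> fn \<Rightarrow> fn \<Rightarrow> bool" where
  "horiz_const A F f \<longleftrightarrow> (\<forall>(x,y)\<in>A. \<forall>i. hdelta F i f x y = 0)"

definition landsberg :: "((real^2) \<times> (real^2)) set \<Rightarrow> fn \<Rightarrow> fn \<Rightarrow> bool" where
  "landsberg A F I \<longleftrightarrow> (\<forall>(x,y)\<in>A. hd1 F I x y = 0)"

end

theory Submission
  imports Defs
begin

(* Write f_{;2} = eps F m^k dy_k f, dy_k the vertical derivative. Since f is h(0), the covector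
   dy_k f annihilates y and is therefore a multiple c m_k of the frame covector. Commuting delta_i
   with dy_k and using delta_i f = 0 and delta_i F = 0 gives delta_i f_{;2} = c F m_l m^l_{|i},
   where |i is the horizontal Berwald covariant derivative. Differentiating g(m^#, m^#) = eps
   horizontally shows that m_l m^l_{|i} is a multiple of L(m^#, m^#, d_i), L the Landsberg tensor.
   This covector annihilates y because the spray is homogeneous, and its value on m^# is, up to
   terms that vanish for the same reason, a multiple of I_{,1}, since F C(m^#, m^#, m^#) = I. For
   a Landsberg surface it therefore vanishes, so f_{;2} is horizontally constant; being smooth and
   h(0) again, f_{;2} can take the place of f, which gives the claim for f_{;2;2}. *)

type_synonym tm_point = "(real^2) \<times> (real^2)"

definition dderiv :: "tm_point \<Rightarrow> fn \<Rightarrow> fn" where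
  "dderiv v f = (\<lambda>x y. deriv (\<lambda>t. case_prod f ((x,y) + t *\<^sub>R v)) 0)"

definition xdir :: "2 \<Rightarrow> tm_point" where "xdir i = (axis i 1, 0)"
definition ydir :: "2 \<Rightarrow> tm_point" where "ydir i = (0, axis i 1)"

lemma dx_eq_dderiv: "dx i = dderiv (xdir i)"
  by (simp add: dx_def dderiv_def case_prod_unfold xdir_def fun_eq_iff)

lemma dy_eq_dderiv: "dy i = dderiv (ydir i)"
  by (simp add: dy_def dderiv_def case_prod_unfold ydir_def fun_eq_iff)

lemma pdir_eq_dderiv: "pdir d = dderiv (if fst d then ydir (snd d) else xdir (snd d))"
  by (simp add: pdir_def dx_eq_dderiv dy_eq_dderiv fun_eq_iff)

lemma has_real_derivative_along_line:
  assumes "case_prod f differentiable (at (q + s *\<^sub>R v))"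
  shows "((\<lambda>t. case_prod f (q + t *\<^sub>R v)) has_real_derivative frechet_derivative (case_prod f) (at (q + s *\<^sub>R v)) v) (at s)"
proof -
  have l: "((\<lambda>t. q + t *\<^sub>R v) has_derivative (\<lambda>t. t *\<^sub>R v)) (at s)"
    by (auto intro!: derivative_eq_intros)
  have f: "(case_prod f has_derivative frechet_derivative (case_prod f) (at (q + s *\<^sub>R v))) (at (q + s *\<^sub>R v))"
    using assms frechet_derivative_works by blast
  have "((\<lambda>t. case_prod f (q + t *\<^sub>R v)) has_derivative (\<lambda>t. frechet_derivative (case_prod f) (at (q + s *\<^sub>R v)) (t *\<^sub>R v))) (at s)"
    using diff_chain_at[OF l f] by (simp add: o_def)
  moreover have "linear (frechet_derivative (case_prod f) (at (q + s *\<^sub>R v)))"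
    using f has_derivative_linear by blast
  ultimately show ?thesis
    by (auto intro: has_derivative_imp_has_field_derivative simp: linear_scale)
qed

lemma dderiv_eq_frechet_derivative:
  assumes "case_prod f differentiable (at (x,y))"
  shows "dderiv v f x y = frechet_derivative (case_prod f) (at (x,y)) v"
proof -
  have "((\<lambda>t. case_prod f ((x,y) + t *\<^sub>R v)) has_real_derivative frechet_derivative (case_prod f) (at (x,y)) v) (at 0)"
    using has_real_derivative_along_line[of f "(x,y)" 0 v] assms by simp
  then show ?thesis unfolding dderiv_def by (rule DERIV_imp_deriv)
qed

lemma dderiv_DERIV:
  assumes "case_prod f differentiable (at (q + s *\<^sub>R v))"
  shows "((\<lambda>t. case_prod f (q + t *\<^sub>R v)) has_real_derivative case_prod (dderiv v f) (q + s *\<^sub>R v)) (at s)"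
proof -
  obtain a b where ab: "q + s *\<^sub>R v = (a,b)" by (cases "q + s *\<^sub>R v") auto
  show ?thesis
    using has_real_derivative_along_line[OF assms] dderiv_eq_frechet_derivative[of f a b v] assms unfolding ab by simp
qed

definition agree_on :: "tm_point set \<Rightarrow> fn \<Rightarrow> fn \<Rightarrow> bool" where
  "agree_on A f g \<longleftrightarrow> (\<forall>x y. (x,y) \<in> A \<longrightarrow> f x y = g x y)"

definition diff_on :: "tm_point set \<Rightarrow> fn \<Rightarrow> bool" where
  "diff_on A f \<longleftrightarrow> (\<forall>p\<in>A. case_prod f differentiable (at p))"

definition smooth_upto :: "tm_point set \<Rightarrow> nat \<Rightarrow> fn \<Rightarrow> bool" where
  "smooth_upto A n f \<longleftrightarrow> (\<forall>ds. length ds \<le> n \<longrightarrow> diff_on A (foldr pdir ds f))"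

lemma smooth_on_TM_iff_smooth_upto: "smooth_on_TM A f \<longleftrightarrow> (\<forall>n. smooth_upto A n f)"
  unfolding smooth_on_TM_def smooth_upto_def diff_on_def case_prod_unfold by auto

lemma smooth_upto_0: "smooth_upto A 0 f \<longleftrightarrow> diff_on A f"
  unfolding smooth_upto_def by auto

lemma smooth_upto_Suc: "smooth_upto A (Suc n) f \<longleftrightarrow> diff_on A f \<and> (\<forall>d. smooth_upto A n (pdir d f))"
proof
  assume h: "smooth_upto A (Suc n) f"
  show "diff_on A f \<and> (\<forall>d. smooth_upto A n (pdir d f))"
  proof (intro conjI allI)
    show "diff_on A f" using h[unfolded smooth_upto_def, rule_format, of "[]"] by simp
    fix d show "smooth_upto A n (pdir d f)" unfolding smooth_upto_def
    proof (intro allI impI)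
      fix ds :: "(bool \<times> 2) list" assume "length ds \<le> n"
      then show "diff_on A (foldr pdir ds (pdir d f))"
        using h[unfolded smooth_upto_def, rule_format, of "ds @ [d]"] by simp
    qed
  qed
next
  assume h: "diff_on A f \<and> (\<forall>d. smooth_upto A n (pdir d f))"
  show "smooth_upto A (Suc n) f" unfolding smooth_upto_def
  proof (intro allI impI)
    fix ds :: "(bool \<times> 2) list" assume l: "length ds \<le> Suc n"
    show "diff_on A (foldr pdir ds f)"
    proof (cases ds rule: rev_cases)
      case Nil then show ?thesis using h by simp
    next
      case (snoc ds' d)
      then show ?thesis using h l unfolding smooth_upto_def by (cases d) auto
    qed
  qed
qed

lemma smooth_upto_Suc_imp: "smooth_upto A (Suc n) f \<Longrightarrow> smooth_upto A n f"
  unfolding smooth_upto_def by auto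

lemma smooth_upto_diff_on: "smooth_upto A n f \<Longrightarrow> diff_on A f"
  unfolding smooth_upto_def by (metis foldr.simps(1) id_apply le0 list.size(3))

lemma norm_scaleR_add_le:
  fixes v w :: "'a::real_normed_vector"
  assumes "0 \<le> a" "a \<le> s" "0 \<le> b" "b \<le> s"
  shows "norm (a *\<^sub>R v + b *\<^sub>R w) \<le> s * (norm v + norm w)"
proof -
  have "norm (a *\<^sub>R v + b *\<^sub>R w) \<le> a * norm v + b * norm w"
    using norm_triangle_ineq[of "a *\<^sub>R v" "b *\<^sub>R w"] assms by simp
  also have "\<dots> \<le> s * norm v + s * norm w"
    using assms by (intro add_mono mult_right_mono) auto
  finally show ?thesis by (simp add: distrib_left)
qed

definition second_difference :: "fn \<Rightarrow> tm_point \<Rightarrow> tm_point \<Rightarrow> tm_point \<Rightarrow> real \<Rightarrow> real" where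
  "second_difference f p v w s = case_prod f (p + s *\<^sub>R v + s *\<^sub>R w) - case_prod f (p + s *\<^sub>R v)
     - case_prod f (p + s *\<^sub>R w) + case_prod f p"

lemma second_difference_commute: "second_difference f p w v s = second_difference f p v w s"
  unfolding second_difference_def by (simp add: algebra_simps)

locale open_domain =
  fixes A :: "tm_point set"
  assumes open_A: "open A"
begin

lemma eventually_line_in_A: assumes "p \<in> A" shows "\<forall>\<^sub>F t in nhds 0. p + t *\<^sub>R v \<in> A"
proof -
  have "((\<lambda>t::real. p + t *\<^sub>R v) \<longlongrightarrow> p + 0 *\<^sub>R v) (nhds 0)"
    by (intro tendsto_intros filterlim_ident)
  then show ?thesis using topological_tendstoD open_A assms by fastforce
qed

lemma dderiv_cong:
  assumes "agree_on A f g" "(x,y) \<in> A"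
  shows "dderiv v f x y = dderiv v g x y"
proof -
  have "eventually (\<lambda>t. case_prod f ((x,y) + t *\<^sub>R v) = case_prod g ((x,y) + t *\<^sub>R v)) (nhds 0)"
    using eventually_line_in_A[OF assms(2), of v]
  proof (rule eventually_mono)
    fix t assume "(x, y) + t *\<^sub>R v \<in> A"
    then show "case_prod f ((x, y) + t *\<^sub>R v) = case_prod g ((x, y) + t *\<^sub>R v)"
      using assms(1) unfolding agree_on_def case_prod_unfold by (cases "(x, y) + t *\<^sub>R v") auto
  qed
  then show ?thesis unfolding dderiv_def by (rule deriv_cong_ev) simp
qed

lemma agree_on_dderiv: "agree_on A f g \<Longrightarrow> agree_on A (dderiv v f) (dderiv v g)"
  using dderiv_cong unfolding agree_on_def by blast

lemma agree_on_pdir: "agree_on A f g \<Longrightarrow> agree_on A (pdir d f) (pdir d g)"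
  unfolding pdir_eq_dderiv by (rule agree_on_dderiv)

lemma diff_on_cong: assumes "diff_on A f" "agree_on A f g" shows "diff_on A g"
  unfolding diff_on_def
proof
  fix p assume p: "p \<in> A"
  then obtain D where D: "(case_prod f has_derivative D) (at p)" using assms(1) unfolding diff_on_def differentiable_def by blast
  have "(case_prod g has_derivative D) (at p)"
    by (rule has_derivative_transform_within_open[OF D open_A p]) (use assms(2) in \<open>auto simp: agree_on_def case_prod_unfold\<close>)
  then show "case_prod g differentiable at p" unfolding differentiable_def by blast
qed

lemma smooth_upto_cong: "smooth_upto A n f \<Longrightarrow> agree_on A f g \<Longrightarrow> smooth_upto A n g"
proof (induction n arbitrary: f g)
  case 0 then show ?case using diff_on_cong by (simp add: smooth_upto_0)
next
  case (Suc n)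
  then show ?case unfolding smooth_upto_Suc using diff_on_cong agree_on_pdir by blast
qed

lemma dderiv_DERIV0:
  assumes "diff_on A f" "(x,y) \<in> A"
  shows "((\<lambda>t. case_prod f ((x,y) + t *\<^sub>R v)) has_real_derivative dderiv v f x y) (at 0)"
  using dderiv_DERIV[of f "(x,y)" 0 v] assms unfolding diff_on_def by simp

lemma dderiv_add:
  assumes "diff_on A f" "diff_on A g" "(x,y) \<in> A"
  shows "dderiv v (\<lambda>x y. f x y + g x y) x y = dderiv v f x y + dderiv v g x y"
  unfolding dderiv_def[of v "\<lambda>x y. f x y + g x y"]
  by (rule DERIV_imp_deriv) (use DERIV_add[OF dderiv_DERIV0[OF assms(1,3)] dderiv_DERIV0[OF assms(2,3)]] in \<open>simp add: case_prod_unfold\<close>)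

lemma dderiv_diff:
  assumes "diff_on A f" "diff_on A g" "(x,y) \<in> A"
  shows "dderiv v (\<lambda>x y. f x y - g x y) x y = dderiv v f x y - dderiv v g x y"
  unfolding dderiv_def[of v "\<lambda>x y. f x y - g x y"]
  by (rule DERIV_imp_deriv) (use DERIV_diff[OF dderiv_DERIV0[OF assms(1,3)] dderiv_DERIV0[OF assms(2,3)]] in \<open>simp add: case_prod_unfold\<close>)

lemma dderiv_mult:
  assumes "diff_on A f" "diff_on A g" "(x,y) \<in> A"
  shows "dderiv v (\<lambda>x y. f x y * g x y) x y = dderiv v f x y * g x y + f x y * dderiv v g x y"
  unfolding dderiv_def[of v "\<lambda>x y. f x y * g x y"]
  by (rule DERIV_imp_deriv) (use DERIV_mult[OF dderiv_DERIV0[OF assms(1,3)] dderiv_DERIV0[OF assms(2,3)]] in \<open>simp add: case_prod_unfold algebra_simps\<close>)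

lemma dderiv_const: "dderiv v (\<lambda>x y. c) x y = 0"
  unfolding dderiv_def case_prod_unfold by simp

lemma dderiv_inverse:
  assumes "diff_on A f" "(x,y) \<in> A" "f x y \<noteq> 0"
  shows "dderiv v (\<lambda>x y. inverse (f x y)) x y = - (dderiv v f x y * inverse (f x y) * inverse (f x y))"
  unfolding dderiv_def[of v "\<lambda>x y. inverse (f x y)"]
  by (rule DERIV_imp_deriv) (use DERIV_inverse_fun[OF dderiv_DERIV0[OF assms(1,2)]] assms(3) in \<open>simp add: case_prod_unfold power2_eq_square mult.assoc\<close>)

lemma dderiv_ycoord: "dderiv v (\<lambda>x y. y $ j) x y = snd v $ j"
proof -
  have "((\<lambda>t. case_prod (\<lambda>x y. y $ j) ((x,y) + t *\<^sub>R v)) has_real_derivative snd v $ j) (at 0)"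
    by (cases v) (auto simp: case_prod_unfold intro!: derivative_eq_intros)
  then show ?thesis unfolding dderiv_def by (rule DERIV_imp_deriv)
qed

lemma diff_on_add: "diff_on A f \<Longrightarrow> diff_on A g \<Longrightarrow> diff_on A (\<lambda>x y. f x y + g x y)"
  unfolding diff_on_def case_prod_unfold by simp
lemma diff_on_diff: "diff_on A f \<Longrightarrow> diff_on A g \<Longrightarrow> diff_on A (\<lambda>x y. f x y - g x y)"
  unfolding diff_on_def case_prod_unfold by simp
lemma diff_on_mult: "diff_on A f \<Longrightarrow> diff_on A g \<Longrightarrow> diff_on A (\<lambda>x y. f x y * g x y)"
  unfolding diff_on_def case_prod_unfold by simp
lemma diff_on_const: "diff_on A (\<lambda>x y. c)"
  unfolding diff_on_def case_prod_unfold by simp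
lemma diff_on_inverse: "diff_on A f \<Longrightarrow> (\<forall>x y. (x,y) \<in> A \<longrightarrow> f x y \<noteq> 0) \<Longrightarrow> diff_on A (\<lambda>x y. inverse (f x y))"
  unfolding diff_on_def case_prod_unfold by (auto intro!: differentiable_inverse)
lemma diff_on_ycoord: "diff_on A (\<lambda>x y. y $ j)"
  unfolding diff_on_def case_prod_unfold by (auto intro!: derivative_intros bounded_linear_imp_differentiable bounded_linear_compose[OF bounded_linear_vec_nth bounded_linear_snd])

lemma smooth_upto_arith:
  "smooth_upto A n f \<Longrightarrow> smooth_upto A n g \<Longrightarrow> smooth_upto A n (\<lambda>x y. f x y + g x y) \<and> smooth_upto A n (\<lambda>x y. f x y - g x y)
     \<and> smooth_upto A n (\<lambda>x y. f x y * g x y)"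
proof (induction n arbitrary: f g)
  case 0 then show ?case by (simp add: smooth_upto_0 diff_on_add diff_on_mult diff_on_diff)
next
  case (Suc n)
  have f: "diff_on A f" "\<And>d. smooth_upto A n (pdir d f)" "smooth_upto A n f" using Suc.prems(1) smooth_upto_Suc smooth_upto_Suc_imp by blast+
  have g: "diff_on A g" "\<And>d. smooth_upto A n (pdir d g)" "smooth_upto A n g" using Suc.prems(2) smooth_upto_Suc smooth_upto_Suc_imp by blast+
  have "smooth_upto A n (pdir d (\<lambda>x y. f x y + g x y))" for d
    using Suc.IH[OF f(2)[of d] g(2)[of d]] unfolding pdir_eq_dderiv
    by (elim conjE smooth_upto_cong) (auto simp: agree_on_def dderiv_add f g)
  moreover have "smooth_upto A n (pdir d (\<lambda>x y. f x y - g x y))" for d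
    using Suc.IH[OF f(2)[of d] g(2)[of d]] unfolding pdir_eq_dderiv
    by (elim conjE smooth_upto_cong) (auto simp: agree_on_def dderiv_diff f g)
  moreover have "smooth_upto A n (pdir d (\<lambda>x y. f x y * g x y))" for d
  proof -
    have "smooth_upto A n (\<lambda>x y. pdir d f x y * g x y + f x y * pdir d g x y)"
      using Suc.IH[OF f(2)[of d] g(3)] Suc.IH[OF f(3) g(2)[of d]] Suc.IH
      by blast
    then show ?thesis unfolding pdir_eq_dderiv
      by (elim smooth_upto_cong) (auto simp: agree_on_def dderiv_mult f g)
  qed
  ultimately show ?case
    by (simp add: smooth_upto_Suc f g diff_on_add diff_on_mult diff_on_diff)
qed

lemma smooth_upto_const: "smooth_upto A n (\<lambda>x y. c)"
proof (induction n arbitrary: c)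
  case 0 then show ?case by (simp add: smooth_upto_0 diff_on_const)
next
  case (Suc n)
  have "pdir d (\<lambda>x y. c) = (\<lambda>x y. 0)" for d unfolding pdir_eq_dderiv by (simp add: fun_eq_iff dderiv_const)
  then show ?case using Suc by (simp add: smooth_upto_Suc diff_on_const)
qed

lemma smooth_upto_ycoord: "smooth_upto A n (\<lambda>x y. y $ j)"
proof (cases n)
  case 0 then show ?thesis by (simp add: smooth_upto_0 diff_on_ycoord)
next
  case (Suc k)
  have "pdir d (\<lambda>x y. y $ j) = (\<lambda>x y. snd (if fst d then ydir (snd d) else xdir (snd d)) $ j)" for d
    unfolding pdir_eq_dderiv by (simp add: fun_eq_iff dderiv_ycoord)
  then show ?thesis using Suc by (simp add: smooth_upto_Suc diff_on_ycoord smooth_upto_const)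
qed

lemma smooth_upto_inverse:
  "smooth_upto A n f \<Longrightarrow> (\<forall>x y. (x,y) \<in> A \<longrightarrow> f x y \<noteq> 0) \<Longrightarrow> smooth_upto A n (\<lambda>x y. inverse (f x y))"
proof (induction n arbitrary: f)
  case 0 then show ?case by (simp add: smooth_upto_0 diff_on_inverse)
next
  case (Suc n)
  have f: "diff_on A f" "\<And>d. smooth_upto A n (pdir d f)" "smooth_upto A n f" using Suc.prems(1) smooth_upto_Suc smooth_upto_Suc_imp by blast+
  have i: "smooth_upto A n (\<lambda>x y. inverse (f x y))" using Suc.IH[OF f(3) Suc.prems(2)] .
  have "smooth_upto A n (pdir d (\<lambda>x y. inverse (f x y)))" for d
  proof -
    have "smooth_upto A n (\<lambda>x y. (0::real) - pdir d f x y * inverse (f x y) * inverse (f x y))"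
      using smooth_upto_arith[OF f(2) i] smooth_upto_arith[OF _ i] smooth_upto_arith[OF smooth_upto_const] by blast
    then show ?thesis unfolding pdir_eq_dderiv
      by (elim smooth_upto_cong) (use Suc.prems(2) in \<open>auto simp: agree_on_def dderiv_inverse f\<close>)
  qed
  then show ?case using f Suc.prems(2) by (simp add: smooth_upto_Suc diff_on_inverse)
qed

lemma smooth_upto_pdir: "smooth_upto A (Suc n) f \<Longrightarrow> smooth_upto A n (pdir d f)"
  using smooth_upto_Suc by blast

lemma dderiv_DERIV_on:
  assumes "diff_on A g" "q + s *\<^sub>R v \<in> A"
  shows "((\<lambda>t. case_prod g (q + t *\<^sub>R v)) has_real_derivative case_prod (dderiv v g) (q + s *\<^sub>R v)) (at s)"
  using dderiv_DERIV[of g q s v] assms unfolding diff_on_def by blast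

lemma second_difference_mvt:
  assumes df: "diff_on A f" and dv: "diff_on A (dderiv v f)"
    and r: "ball p r \<subseteq> A" and s: "0 < s" "s * (norm v + norm w) < r"
  obtains a b where "0 < a" "a < s" "0 < b" "b < s"
    "second_difference f p v w s = s * s * case_prod (dderiv w (dderiv v f)) (p + a *\<^sub>R v + b *\<^sub>R w)"
proof -
  have inA: "p + a *\<^sub>R v + b *\<^sub>R w \<in> A" if "0 \<le> a" "a \<le> s" "0 \<le> b" "b \<le> s" for a b
  proof -
    have "dist (p + a *\<^sub>R v + b *\<^sub>R w) p < r"
      using norm_scaleR_add_le[OF that, of v w] s by (simp add: dist_norm add.assoc)
    then show ?thesis using r by (auto simp: dist_commute)
  qed
  define phi where "phi t = case_prod f ((p + s *\<^sub>R w) + t *\<^sub>R v) - case_prod f (p + t *\<^sub>R v)" for t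
  have "DERIV phi t :> case_prod (dderiv v f) ((p + s *\<^sub>R w) + t *\<^sub>R v) - case_prod (dderiv v f) (p + t *\<^sub>R v)"
    if "0 \<le> t" "t \<le> s" for t
    unfolding phi_def
    using inA[of t s] inA[of t 0] that s
    by (intro DERIV_diff dderiv_DERIV_on df) (auto simp: algebra_simps)
  from MVT2[OF s(1) this] obtain a where a: "0 < a" "a < s"
    "phi s - phi 0 = s * (case_prod (dderiv v f) ((p + s *\<^sub>R w) + a *\<^sub>R v) - case_prod (dderiv v f) (p + a *\<^sub>R v))"
    by auto
  define psi where "psi u = case_prod (dderiv v f) ((p + a *\<^sub>R v) + u *\<^sub>R w)" for u
  have "DERIV psi u :> case_prod (dderiv w (dderiv v f)) ((p + a *\<^sub>R v) + u *\<^sub>R w)" if "0 \<le> u" "u \<le> s" for u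
    unfolding psi_def using inA[of a u] that a by (intro dderiv_DERIV_on dv) auto
  from MVT2[OF s(1) this] obtain b where b: "0 < b" "b < s"
    "psi s - psi 0 = s * case_prod (dderiv w (dderiv v f)) ((p + a *\<^sub>R v) + b *\<^sub>R w)"
    by auto
  have "second_difference f p v w s = phi s - phi 0"
    unfolding phi_def second_difference_def by (simp add: algebra_simps)
  also have "\<dots> = s * (psi s - psi 0)" using a(3) unfolding psi_def by (simp add: algebra_simps)
  also have "\<dots> = s * s * case_prod (dderiv w (dderiv v f)) (p + a *\<^sub>R v + b *\<^sub>R w)" using b(3) by simp
  finally show ?thesis using a b that by blast
qed

lemma second_difference_tendsto:
  assumes df: "diff_on A f" and dv: "diff_on A (dderiv v f)"
    and dvw: "diff_on A (dderiv w (dderiv v f))" and p: "p \<in> A"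
  shows "((\<lambda>s. second_difference f p v w s / (s * s)) \<longlongrightarrow> case_prod (dderiv w (dderiv v f)) p) (at_right 0)"
proof -
  define H where "H = case_prod (dderiv w (dderiv v f))"
  obtain r where r: "r > 0" "ball p r \<subseteq> A" using open_A p open_contains_ball by blast
  have cont: "continuous (at p) H"
    using dvw p unfolding diff_on_def H_def by (simp add: differentiable_imp_continuous_within)
  show ?thesis unfolding H_def[symmetric]
  proof (rule tendstoI)
    fix e :: real assume "e > 0"
    then obtain d where d: "d > 0" "\<forall>q. dist q p < d \<longrightarrow> dist (H q) (H p) < e"
      using cont unfolding continuous_at_eps_delta by blast
    have "((\<lambda>s. s * (norm v + norm w)) \<longlongrightarrow> 0 * (norm v + norm w)) (at_right (0::real))"
      by (intro tendsto_intros)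
    then have "\<forall>\<^sub>F s in at_right 0. s * (norm v + norm w) < min r d"
      using r d by (intro order_tendstoD(2)) auto
    with eventually_at_right_less
    show "\<forall>\<^sub>F s in at_right 0. dist (second_difference f p v w s / (s * s)) (H p) < e"
    proof eventually_elim
      case (elim s)
      then obtain a b where ab: "0 < a" "a < s" "0 < b" "b < s"
        and eq: "second_difference f p v w s = s * s * H (p + a *\<^sub>R v + b *\<^sub>R w)"
        using second_difference_mvt[OF df dv r(2), of s w] unfolding H_def by auto
      have "dist (p + a *\<^sub>R v + b *\<^sub>R w) p < d"
        using norm_scaleR_add_le[of a s b v w] ab elim by (simp add: dist_norm add.assoc)
      then have "dist (H (p + a *\<^sub>R v + b *\<^sub>R w)) (H p) < e" using d(2) by blast
      then show ?case using eq elim by simp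
    qed
  qed
qed

text \<open>Schwarz's theorem: both mixed derivatives are the limit of the same symmetric second
  difference quotient.\<close>
lemma dderiv_commute:
  assumes "diff_on A f" "diff_on A (dderiv v f)" "diff_on A (dderiv w f)"
    "diff_on A (dderiv w (dderiv v f))" "diff_on A (dderiv v (dderiv w f))" "p \<in> A"
  shows "case_prod (dderiv w (dderiv v f)) p = case_prod (dderiv v (dderiv w f)) p"
proof -
  have "((\<lambda>s. second_difference f p v w s / (s * s)) \<longlongrightarrow> case_prod (dderiv v (dderiv w f)) p) (at_right 0)"
    using second_difference_tendsto[OF assms(1,3,5,6)] by (simp only: second_difference_commute)
  with second_difference_tendsto[OF assms(1,2,4,6)] show ?thesis
    by (rule tendsto_unique[OF trivial_limit_at_right_real])
qed

lemma diff_on_pdir: "smooth_upto A (Suc n) f \<Longrightarrow> diff_on A (pdir d f)"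
  using smooth_upto_Suc smooth_upto_diff_on by blast

lemma pdir_commute:
  assumes "smooth_on_TM A f" "(x,y) \<in> A"
  shows "pdir a (pdir b f) x y = pdir b (pdir a f) x y"
proof -
  have s: "smooth_upto A n f" for n using assms(1) smooth_on_TM_iff_smooth_upto by blast
  have d1: "diff_on A (pdir a f)" "diff_on A (pdir b f)" using diff_on_pdir[OF s[of "Suc 0"]] by auto
  have d2: "diff_on A (pdir a (pdir b f))" "diff_on A (pdir b (pdir a f))"
    using diff_on_pdir[OF smooth_upto_pdir[OF s[of "Suc (Suc 0)"]]] by (auto simp: numeral_2_eq_2)
  show ?thesis
    using dderiv_commute[OF smooth_upto_diff_on[OF s[of 0]], of "if fst b then ydir (snd b) else xdir (snd b)"
        "if fst a then ydir (snd a) else xdir (snd a)" "(x,y)"] d1 d2 assms(2)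
    unfolding pdir_eq_dderiv by simp
qed

abbreviation smooth where "smooth \<equiv> smooth_on_TM A"

lemma smooth_imp_smooth_upto: "smooth f \<Longrightarrow> smooth_upto A n f" using smooth_on_TM_iff_smooth_upto by blast
lemma smooth_diff_on: "smooth f \<Longrightarrow> diff_on A f" using smooth_imp_smooth_upto smooth_upto_diff_on by blast

lemma smooth_add[simp]: "smooth f \<Longrightarrow> smooth g \<Longrightarrow> smooth (\<lambda>x y. f x y + g x y)"
  using smooth_upto_arith smooth_on_TM_iff_smooth_upto by blast
lemma smooth_diff[simp]: "smooth f \<Longrightarrow> smooth g \<Longrightarrow> smooth (\<lambda>x y. f x y - g x y)"
  using smooth_upto_arith smooth_on_TM_iff_smooth_upto by blast
lemma smooth_mult[simp]: "smooth f \<Longrightarrow> smooth g \<Longrightarrow> smooth (\<lambda>x y. f x y * g x y)"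
  using smooth_upto_arith smooth_on_TM_iff_smooth_upto by blast
lemma smooth_const[simp]: "smooth (\<lambda>x y. c)"
  using smooth_upto_const smooth_on_TM_iff_smooth_upto by blast
lemma smooth_ycoord[simp]: "smooth (\<lambda>x y. y $ j)"
  using smooth_upto_ycoord smooth_on_TM_iff_smooth_upto by blast
lemma smooth_inverse: "smooth f \<Longrightarrow> (\<forall>x y. (x,y) \<in> A \<longrightarrow> f x y \<noteq> 0) \<Longrightarrow> smooth (\<lambda>x y. inverse (f x y))"
  using smooth_upto_inverse smooth_on_TM_iff_smooth_upto by blast
lemma smooth_divide: "smooth f \<Longrightarrow> smooth g \<Longrightarrow> (\<forall>x y. (x,y) \<in> A \<longrightarrow> g x y \<noteq> 0) \<Longrightarrow> smooth (\<lambda>x y. f x y / g x y)"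
  using smooth_mult[OF _ smooth_inverse, of f g] by (simp add: divide_inverse)
lemma smooth_power2[simp]: "smooth f \<Longrightarrow> smooth (\<lambda>x y. (f x y)^2)"
  using smooth_mult[of f f] by (simp add: power2_eq_square)
lemma smooth_sum2[simp]: "(\<And>k. smooth (h k)) \<Longrightarrow> smooth (\<lambda>x y. \<Sum>k\<in>(UNIV::2 set). h k x y)"
  unfolding sum_2 by (rule smooth_add) auto
lemma smooth_pdir: "smooth f \<Longrightarrow> smooth (pdir d f)"
  using smooth_upto_pdir smooth_on_TM_iff_smooth_upto by blast
lemma smooth_dx[simp]: "smooth f \<Longrightarrow> smooth (dx i f)"
  using smooth_pdir[of f "(False, i)"] by (simp add: pdir_def)
lemma smooth_dy[simp]: "smooth f \<Longrightarrow> smooth (dy i f)"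
  using smooth_pdir[of f "(True, i)"] by (simp add: pdir_def)
lemma smooth_cong: "smooth f \<Longrightarrow> agree_on A f g \<Longrightarrow> smooth g"
  using smooth_upto_cong smooth_on_TM_iff_smooth_upto by blast

lemma dx_cong: "agree_on A f g \<Longrightarrow> (x,y) \<in> A \<Longrightarrow> dx i f x y = dx i g x y"
  unfolding dx_eq_dderiv by (rule dderiv_cong)
lemma dy_cong: "agree_on A f g \<Longrightarrow> (x,y) \<in> A \<Longrightarrow> dy i f x y = dy i g x y"
  unfolding dy_eq_dderiv by (rule dderiv_cong)
lemma dy_zero: "(\<And>x y. (x,y) \<in> A \<Longrightarrow> f x y = 0) \<Longrightarrow> (x,y) \<in> A \<Longrightarrow> dy i f x y = 0"
  using dy_cong[of f "\<lambda>x y. 0" x y i] dderiv_const unfolding agree_on_def dy_eq_dderiv by simp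
lemma dx_zero: "(\<And>x y. (x,y) \<in> A \<Longrightarrow> f x y = 0) \<Longrightarrow> (x,y) \<in> A \<Longrightarrow> dx i f x y = 0"
  using dx_cong[of f "\<lambda>x y. 0" x y i] dderiv_const unfolding agree_on_def dx_eq_dderiv by simp

lemma dx_add[simp]: "smooth f \<Longrightarrow> smooth g \<Longrightarrow> (x,y) \<in> A \<Longrightarrow> dx i (\<lambda>x y. f x y + g x y) x y = dx i f x y + dx i g x y"
  unfolding dx_eq_dderiv by (rule dderiv_add) (auto simp: smooth_diff_on)
lemma dy_add[simp]: "smooth f \<Longrightarrow> smooth g \<Longrightarrow> (x,y) \<in> A \<Longrightarrow> dy i (\<lambda>x y. f x y + g x y) x y = dy i f x y + dy i g x y"
  unfolding dy_eq_dderiv by (rule dderiv_add) (auto simp: smooth_diff_on)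
lemma dx_diff[simp]: "smooth f \<Longrightarrow> smooth g \<Longrightarrow> (x,y) \<in> A \<Longrightarrow> dx i (\<lambda>x y. f x y - g x y) x y = dx i f x y - dx i g x y"
  unfolding dx_eq_dderiv by (rule dderiv_diff) (auto simp: smooth_diff_on)
lemma dy_diff[simp]: "smooth f \<Longrightarrow> smooth g \<Longrightarrow> (x,y) \<in> A \<Longrightarrow> dy i (\<lambda>x y. f x y - g x y) x y = dy i f x y - dy i g x y"
  unfolding dy_eq_dderiv by (rule dderiv_diff) (auto simp: smooth_diff_on)
lemma dx_mult[simp]: "smooth f \<Longrightarrow> smooth g \<Longrightarrow> (x,y) \<in> A \<Longrightarrow> dx i (\<lambda>x y. f x y * g x y) x y = dx i f x y * g x y + f x y * dx i g x y"
  unfolding dx_eq_dderiv by (rule dderiv_mult) (auto simp: smooth_diff_on)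
lemma dy_mult[simp]: "smooth f \<Longrightarrow> smooth g \<Longrightarrow> (x,y) \<in> A \<Longrightarrow> dy i (\<lambda>x y. f x y * g x y) x y = dy i f x y * g x y + f x y * dy i g x y"
  unfolding dy_eq_dderiv by (rule dderiv_mult) (auto simp: smooth_diff_on)
lemma dx_const[simp]: "dx i (\<lambda>x y. c) x y = 0"
  unfolding dx_eq_dderiv by (rule dderiv_const)
lemma dy_const[simp]: "dy i (\<lambda>x y. c) x y = 0"
  unfolding dy_eq_dderiv by (rule dderiv_const)
lemma dx_ycoord[simp]: "dx i (\<lambda>x y. y $ j) x y = 0"
  unfolding dx_eq_dderiv by (simp add: dderiv_ycoord xdir_def)
lemma dy_ycoord[simp]: "dy i (\<lambda>x y. y $ j) x y = (if j = i then 1 else 0)"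
  unfolding dy_eq_dderiv by (simp add: dderiv_ycoord ydir_def axis_def)
lemma dy_sum2[simp]: "(\<And>k. smooth (h k)) \<Longrightarrow> (x,y) \<in> A \<Longrightarrow> dy i (\<lambda>x y. \<Sum>k\<in>(UNIV::2 set). h k x y) x y = (\<Sum>k\<in>UNIV. dy i (h k) x y)"
  unfolding sum_2 by (subst dy_add) auto
lemma dy_power2[simp]: "smooth f \<Longrightarrow> (x,y) \<in> A \<Longrightarrow> dy i (\<lambda>x y. (f x y)^2) x y = 2 * f x y * dy i f x y"
  using dy_mult[of f f] by (simp add: power2_eq_square)
lemma dy_inverse: "smooth f \<Longrightarrow> (x,y) \<in> A \<Longrightarrow> f x y \<noteq> 0 \<Longrightarrow> dy i (\<lambda>x y. inverse (f x y)) x y = - (dy i f x y * inverse (f x y) * inverse (f x y))"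
  unfolding dy_eq_dderiv by (rule dderiv_inverse) (auto simp: smooth_diff_on)

lemma dx_dy_commute: "smooth f \<Longrightarrow> (x,y) \<in> A \<Longrightarrow> dx i (dy j f) x y = dy j (dx i f) x y"
  using pdir_commute[of f x y "(False,i)" "(True,j)"] by (simp add: pdir_def)
lemma dy_dy_commute: "smooth f \<Longrightarrow> (x,y) \<in> A \<Longrightarrow> dy i (dy j f) x y = dy j (dy i f) x y"
  using pdir_commute[of f x y "(True,i)" "(True,j)"] by (simp add: pdir_def)

lemma agree_on_dy_dy: "smooth f \<Longrightarrow> agree_on A (dy i (dy j f)) (dy j (dy i f))"
  unfolding agree_on_def using dy_dy_commute by blast

text \<open>Homogeneity in Euler's infinitesimal form; unlike \<^const>\<open>homog\<close> it visibly passes to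
  vertical derivatives and products, with the expected degrees.\<close>
definition euler_op :: "fn \<Rightarrow> fn" where
  "euler_op h = (\<lambda>x y. \<Sum>k\<in>UNIV. y $ k * dy k h x y)"

definition homogeneous :: "real \<Rightarrow> fn \<Rightarrow> bool" where
  "homogeneous r h \<longleftrightarrow> (\<forall>x y. (x,y) \<in> A \<longrightarrow> euler_op h x y = r * h x y)"

lemma homogeneous_dy:
  assumes h: "smooth h" "homogeneous r h" shows "homogeneous (r - 1) (dy j h)"
  unfolding homogeneous_def
proof (intro allI impI)
  fix x y assume p: "(x,y) \<in> A"
  have z: "dy j (\<lambda>x y. euler_op h x y - r * h x y) x y = 0"
    by (rule dy_zero[OF _ p]) (use h(2) in \<open>auto simp: homogeneous_def\<close>)
  have "dy j (\<lambda>x y. euler_op h x y - r * h x y) x y = dy j h x y + euler_op (dy j h) x y - r * dy j h x y"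
    using p h(1) exhaust_2[of j] by (auto simp add: euler_op_def sum_2 dy_dy_commute[of h x y j])
  then show "euler_op (dy j h) x y = (r - 1) * dy j h x y" using z by (simp add: algebra_simps)
qed

lemma homogeneous_dx:
  assumes h: "smooth h" "homogeneous r h" shows "homogeneous r (dx j h)"
  unfolding homogeneous_def
proof (intro allI impI)
  fix x y assume p: "(x,y) \<in> A"
  have z: "dx j (\<lambda>x y. euler_op h x y - r * h x y) x y = 0"
    by (rule dx_zero[OF _ p]) (use h(2) in \<open>auto simp: homogeneous_def\<close>)
  have "dx j (\<lambda>x y. euler_op h x y - r * h x y) x y = euler_op (dx j h) x y - r * dx j h x y"
    using p h(1) by (simp add: euler_op_def sum_2 dx_dy_commute[of h x y])
  then show "euler_op (dx j h) x y = r * dx j h x y" using z by (simp add: algebra_simps)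
qed

lemma euler_op_add: "smooth f \<Longrightarrow> smooth g \<Longrightarrow> (x,y) \<in> A \<Longrightarrow> euler_op (\<lambda>x y. f x y + g x y) x y = euler_op f x y + euler_op g x y"
  unfolding euler_op_def by (simp add: sum_2 algebra_simps)
lemma euler_op_diff: "smooth f \<Longrightarrow> smooth g \<Longrightarrow> (x,y) \<in> A \<Longrightarrow> euler_op (\<lambda>x y. f x y - g x y) x y = euler_op f x y - euler_op g x y"
  unfolding euler_op_def by (simp add: sum_2 algebra_simps)
lemma euler_op_mult: "smooth f \<Longrightarrow> smooth g \<Longrightarrow> (x,y) \<in> A \<Longrightarrow> euler_op (\<lambda>x y. f x y * g x y) x y = euler_op f x y * g x y + f x y * euler_op g x y"
  unfolding euler_op_def by (simp add: sum_2 algebra_simps)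

lemma homogeneous_add: "smooth f \<Longrightarrow> smooth g \<Longrightarrow> homogeneous r f \<Longrightarrow> homogeneous r g \<Longrightarrow> homogeneous r (\<lambda>x y. f x y + g x y)"
  unfolding homogeneous_def by (simp add: euler_op_add algebra_simps)
lemma homogeneous_diff: "smooth f \<Longrightarrow> smooth g \<Longrightarrow> homogeneous r f \<Longrightarrow> homogeneous r g \<Longrightarrow> homogeneous r (\<lambda>x y. f x y - g x y)"
  unfolding homogeneous_def by (simp add: euler_op_diff algebra_simps)
lemma homogeneous_mult: "smooth f \<Longrightarrow> smooth g \<Longrightarrow> homogeneous r f \<Longrightarrow> homogeneous s g \<Longrightarrow> homogeneous (r + s) (\<lambda>x y. f x y * g x y)"
  unfolding homogeneous_def by (simp add: euler_op_mult algebra_simps)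
lemma homogeneous_const: "homogeneous 0 (\<lambda>x y. c)"
  unfolding homogeneous_def euler_op_def by simp
lemma homogeneous_ycoord: "homogeneous 1 (\<lambda>x y. y $ j)"
  unfolding homogeneous_def euler_op_def using exhaust_2[of j] by (auto simp: sum_2)
lemma homogeneous_sum2: "(\<And>k. smooth (h k)) \<Longrightarrow> (\<And>k. homogeneous r (h k)) \<Longrightarrow> homogeneous r (\<lambda>x y. \<Sum>k\<in>(UNIV::2 set). h k x y)"
  unfolding sum_2 by (rule homogeneous_add) auto
lemma homogeneous_inverse:
  assumes "smooth f" "homogeneous r f" "\<forall>x y. (x,y) \<in> A \<longrightarrow> f x y \<noteq> 0"
  shows "homogeneous (- r) (\<lambda>x y. inverse (f x y))"
  using assms unfolding homogeneous_def euler_op_def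
  by (simp add: dy_inverse sum_2 algebra_simps) (simp add: field_simps flip: distrib_left)
lemma homogeneous_cong: "homogeneous r f \<Longrightarrow> smooth f \<Longrightarrow> agree_on A f g \<Longrightarrow> homogeneous r g"
  unfolding homogeneous_def euler_op_def agree_on_def using dy_cong[of f g] agree_on_def by (metis (no_types, lifting) sum.cong)

lemma ydir_decomp: "(0::real^2, y) = y $ 1 *\<^sub>R ydir 1 + y $ 2 *\<^sub>R ydir 2"
  unfolding ydir_def by (simp add: vec_eq_iff forall_2 axis_def)

lemma dderiv_radial:
  assumes "smooth f" "(x,y) \<in> A"
  shows "dderiv (0, y) f x y = euler_op f x y"
proof -
  have d: "case_prod f differentiable (at (x,y))" using smooth_diff_on[OF assms(1)] assms(2) unfolding diff_on_def by blast
  then have lin: "linear (frechet_derivative (case_prod f) (at (x,y)))"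
    using frechet_derivative_works has_derivative_linear by blast
  have "dderiv (0, y) f x y = frechet_derivative (case_prod f) (at (x,y)) (0, y)" by (rule dderiv_eq_frechet_derivative[OF d])
  also have "\<dots> = y $ 1 * frechet_derivative (case_prod f) (at (x,y)) (ydir 1) + y $ 2 * frechet_derivative (case_prod f) (at (x,y)) (ydir 2)"
    unfolding ydir_decomp using lin by (simp add: linear_add linear_scale)
  also have "\<dots> = euler_op f x y"
    unfolding euler_op_def sum_2 dy_eq_dderiv using dderiv_eq_frechet_derivative[OF d] by simp
  finally show ?thesis .
qed

lemma euler_op_homog:
  assumes f: "smooth f" "homog r A f" and r: "r = 0 \<or> r = 1" and p: "(x,y) \<in> A"
  shows "euler_op f x y = r * f x y"
proof -
  have ev: "eventually (\<lambda>t. case_prod f ((x,y) + t *\<^sub>R (0, y)) = (1 + r * t) * f x y) (nhds 0)"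
    unfolding eventually_nhds_metric
  proof (intro exI[of _ 1] conjI allI impI)
    fix t :: real assume "dist t 0 < 1"
    then have t: "1 + t > 0" by (simp add: dist_real_def)
    have "case_prod f ((x,y) + t *\<^sub>R (0, y)) = f x ((1 + t) *\<^sub>R y)" by (simp add: algebra_simps)
    also have "\<dots> = (1 + t) powr r * f x y" using f(2) p t unfolding homog_def by blast
    also have "\<dots> = (1 + r * t) * f x y" using r t by auto
    finally show "case_prod f ((x,y) + t *\<^sub>R (0, y)) = (1 + r * t) * f x y" .
  qed simp
  have "dderiv (0, y) f x y = deriv (\<lambda>t. (1 + r * t) * f x y) 0"
    unfolding dderiv_def by (rule deriv_cong_ev[OF ev refl])
  also have "\<dots> = r * f x y"
    by (rule DERIV_imp_deriv) (auto intro!: derivative_eq_intros)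
  finally show ?thesis using dderiv_radial[OF f(1) p] by simp
qed

lemma homogeneous_if_homog0: "smooth f \<Longrightarrow> homog 0 A f \<Longrightarrow> homogeneous 0 f"
  unfolding homogeneous_def using euler_op_homog by simp

lemma smooth_divc[simp]: "smooth f \<Longrightarrow> smooth (\<lambda>x y. f x y / c)"
  using smooth_mult[OF _ smooth_const, of f "inverse c"] by (simp add: divide_inverse)
lemma dx_divc[simp]: "smooth f \<Longrightarrow> (x,y) \<in> A \<Longrightarrow> dx i (\<lambda>x y. f x y / c) x y = dx i f x y / c"
  using dx_mult[OF _ smooth_const, of f x y i "inverse c"] by (simp add: divide_inverse)
lemma dy_divc[simp]: "smooth f \<Longrightarrow> (x,y) \<in> A \<Longrightarrow> dy i (\<lambda>x y. f x y / c) x y = dy i f x y / c"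
  using dy_mult[OF _ smooth_const, of f x y i "inverse c"] by (simp add: divide_inverse)

lemma homogeneous_mult': "smooth f \<Longrightarrow> smooth g \<Longrightarrow> homogeneous r f \<Longrightarrow> homogeneous s g \<Longrightarrow> t = r + s \<Longrightarrow> homogeneous t (\<lambda>x y. f x y * g x y)"
  using homogeneous_mult by simp
lemma homogeneous_cmult: "smooth g \<Longrightarrow> homogeneous r g \<Longrightarrow> homogeneous r (\<lambda>x y. c * g x y)"
  using homogeneous_mult'[OF smooth_const _ homogeneous_const, of g r r c] by simp
lemma homogeneous_dy': "smooth h \<Longrightarrow> homogeneous r h \<Longrightarrow> s = r - 1 \<Longrightarrow> homogeneous s (dy j h)"
  using homogeneous_dy by simp
lemma homogeneousD: "homogeneous r h \<Longrightarrow> (x,y) \<in> A \<Longrightarrow> (\<Sum>k\<in>UNIV. y $ k * dy k h x y) = r * h x y"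
  unfolding homogeneous_def euler_op_def by blast

end

lemma matrix_inv_det_nz:
  fixes M :: "real^'n^'n"
  assumes "det M \<noteq> 0"
  shows "M ** matrix_inv M = mat 1" "matrix_inv M ** M = mat 1"
proof -
  have "invertible M" using assms invertible_det_nz by blast
  then show "M ** matrix_inv M = mat 1" "matrix_inv M ** M = mat 1"
    unfolding invertible_def matrix_inv_def by (metis (mono_tags, lifting) someI_ex)+
qed

lemma matrix_inv_sums_det_nz:
  fixes M :: "real^'n^'n"
  assumes "det M \<noteq> 0"
  shows "(\<Sum>k\<in>UNIV. M$i$k * matrix_inv M $ k $ j) = (if i = j then 1 else 0)"
    "(\<Sum>k\<in>UNIV. matrix_inv M $ i $ k * M $ k $ j) = (if i = j then 1 else 0)"
  using arg_cong[OF matrix_inv_det_nz(1)[OF assms], of "\<lambda>M. M $ i $ j"]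
    arg_cong[OF matrix_inv_det_nz(2)[OF assms], of "\<lambda>M. M $ i $ j"]
  unfolding matrix_matrix_mult_def mat_def by simp_all

lemma matrix_inv_2x2:
  fixes M :: "real^2^2"
  assumes "det M \<noteq> 0"
  shows "matrix_inv M $ i $ j = ((if i = j then M$1$1 + M$2$2 else 0) - M$i$j) / det M"
proof -
  define B :: "real^2^2" where "B = (\<chi> i j. ((if i = j then M$1$1 + M$2$2 else 0) - M$i$j) / det M)"
  have "(\<Sum>k\<in>UNIV. M$i$k * ((if k = j then M$1$1 + M$2$2 else 0) - M$k$j)) = (if i = j then det M else 0)" for i j
    using exhaust_2[of i] exhaust_2[of j] by (auto simp: sum_2 det_2 algebra_simps)
  then have MB: "M ** B = mat 1"
    using assms unfolding B_def matrix_matrix_mult_def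
    by (simp add: vec_eq_iff mat_def flip: sum_divide_distrib)
  have "matrix_inv M = (matrix_inv M ** M) ** B" by (simp add: MB flip: matrix_mul_assoc)
  also have "\<dots> = B" using matrix_inv_det_nz(2)[OF assms] by simp
  finally show ?thesis unfolding B_def by simp
qed

lemma cramer_2_homogeneous: "(a::real) * u + b * v = 0 \<Longrightarrow> c * u + d * v = 0 \<Longrightarrow> (a * d - b * c) * u = 0 \<and> (a * d - b * c) * v = 0"
  by algebra

locale finsler_frame = open_domain +
  fixes F :: fn and eps :: real and m :: "2 \<Rightarrow> fn"
  assumes smooth_F[simp]: "smooth F"
    and homog_F: "homog 1 A F"
    and y_nonzero: "\<And>x y. (x,y) \<in> A \<Longrightarrow> y \<noteq> 0"
    and det_gmat_nonzero: "\<And>x y. (x,y) \<in> A \<Longrightarrow> det (gmat F x y) \<noteq> 0"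
    and eps_cases: "eps = 1 \<or> eps = -1"
    and smooth_m[simp]: "\<And>i. smooth (m i)"
    and gmet_frame: "\<And>x y i j. (x,y) \<in> A \<Longrightarrow> gmet F i j x y = dy i F x y * dy j F x y + eps * m i x y * m j x y"
begin

lemma eps_times_eps[simp]: "eps * eps = 1" using eps_cases by auto
lemma eps_nonzero[simp]: "eps \<noteq> 0" using eps_cases by auto

lemma euler_op_F: "(x,y) \<in> A \<Longrightarrow> euler_op F x y = F x y"
  using euler_op_homog[OF smooth_F homog_F, of x y] by simp

lemma homogeneous_F: "homogeneous 1 F" unfolding homogeneous_def using euler_op_F by simp

abbreviation F2 where "F2 \<equiv> sqF F"
lemma F2_eq: "F2 = (\<lambda>x y. (F x y)^2)" by (simp add: sqF_def)
lemma smooth_F2[simp]: "smooth F2" unfolding F2_eq by simp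

lemma homogeneous_F2: "homogeneous 2 F2"
  unfolding homogeneous_def
proof (intro allI impI)
  fix x y assume p: "(x,y) \<in> A"
  have "euler_op F2 x y = 2 * F x y * euler_op F x y" using p unfolding F2_eq by (simp add: euler_op_def sum_2 algebra_simps)
  then show "euler_op F2 x y = 2 * F2 x y" using euler_op_F[OF p] by (simp add: F2_eq power2_eq_square)
qed

lemma gmet_eq: "gmet F i j = (\<lambda>x y. (1/2) * dy i (dy j F2) x y)"
  by (simp add: gmet_def)

lemma smooth_gmet[simp]: "smooth (gmet F i j)" unfolding gmet_eq by simp

lemma homogeneous_gmet: "homogeneous 0 (gmet F i j)"
proof -
  have "homogeneous 0 (dy i (dy j F2))" using homogeneous_dy[OF _ homogeneous_dy[OF smooth_F2 homogeneous_F2]] by simp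
  then have "homogeneous (0+0) (\<lambda>x y. (1/2) * dy i (dy j F2) x y)" by (intro homogeneous_mult homogeneous_const) auto
  then show ?thesis unfolding gmet_eq by simp
qed

lemma gmet_sym: "(x,y) \<in> A \<Longrightarrow> gmet F i j x y = gmet F j i x y"
  unfolding gmet_eq using dy_dy_commute[of "F2" x y i j] by simp

lemma gmet_eq_ell: "(x,y) \<in> A \<Longrightarrow> gmet F i j x y = dy i F x y * dy j F x y + F x y * dy i (dy j F) x y"
proof -
  assume p: "(x,y) \<in> A"
  have "agree_on A (dy j F2) (\<lambda>x y. 2 * F x y * dy j F x y)"
    unfolding agree_on_def F2_eq by simp
  then have "dy i (dy j F2) x y = dy i (\<lambda>x y. 2 * F x y * dy j F x y) x y"
    using dy_cong p by blast
  also have "\<dots> = 2 * (dy i F x y * dy j F x y + F x y * dy i (dy j F) x y)"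
    using p by (simp add: algebra_simps)
  finally show ?thesis unfolding gmet_eq by simp
qed

lemma det_gmat_eq: "det (gmat F x y) = gmet F 1 1 x y * gmet F 2 2 x y - gmet F 1 2 x y * gmet F 2 1 x y"
  unfolding gmat_def det_2 by simp

lemma F_nonzero: assumes p: "(x,y) \<in> A" shows "F x y \<noteq> 0"
proof
  assume F0: "F x y = 0"
  have gy: "gmet F i 1 x y * y$1 + gmet F i 2 x y * y$2 = 0" for i
  proof -
    have "gmet F i 1 x y * y$1 + gmet F i 2 x y * y$2 = dy i F x y * euler_op F x y + F x y * (dy i (dy 1 F) x y * y$1 + dy i (dy 2 F) x y * y$2)"
      using p unfolding gmet_eq_ell[OF p] euler_op_def sum_2 by (simp add: algebra_simps)
    then show ?thesis using euler_op_F[OF p] F0 by simp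
  qed
  have "det (gmat F x y) * y$1 = 0" "det (gmat F x y) * y$2 = 0"
    unfolding det_gmat_eq using cramer_2_homogeneous[OF gy[of 1] gy[of 2]] by auto
  then have "y = 0" using det_gmat_nonzero[OF p] by (simp add: vec_eq_iff forall_2)
  then show False using y_nonzero[OF p] by simp
qed

lemma gmet_ginv:
  assumes "(x,y) \<in> A"
  shows "(\<Sum>k\<in>UNIV. gmet F i k x y * ginv F k j x y) = (if i = j then 1 else 0)"
    "(\<Sum>k\<in>UNIV. ginv F i k x y * gmet F k j x y) = (if i = j then 1 else 0)"
  using matrix_inv_sums_det_nz[OF det_gmat_nonzero[OF assms], of i j] unfolding ginv_def gmat_def by simp_all

lemma ginv_eq:
  assumes "(x,y) \<in> A"
  shows "ginv F i j x y = ((if i = j then 1 else 0) * (gmet F 1 1 x y + gmet F 2 2 x y) - gmet F i j x y)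
     / (gmet F 1 1 x y * gmet F 2 2 x y - gmet F 1 2 x y * gmet F 2 1 x y)"
  using matrix_inv_2x2[OF det_gmat_nonzero[OF assms], of i j] unfolding ginv_def det_gmat_eq by (simp add: gmat_def)

lemma det_gmet_nonzero: "(x,y) \<in> A \<Longrightarrow> gmet F 1 1 x y * gmet F 2 2 x y - gmet F 1 2 x y * gmet F 2 1 x y \<noteq> 0"
  using det_gmat_nonzero det_gmat_eq by metis

lemma smooth_ginv[simp]: "smooth (ginv F i j)"
proof -
  have "smooth (\<lambda>x y. ((if i = j then 1 else 0) * (gmet F 1 1 x y + gmet F 2 2 x y) - gmet F i j x y)
     / (gmet F 1 1 x y * gmet F 2 2 x y - gmet F 1 2 x y * gmet F 2 1 x y))"
    by (rule smooth_divide) (use det_gmet_nonzero in auto)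
  then show ?thesis by (rule smooth_cong) (simp add: agree_on_def ginv_eq)
qed

lemma homogeneous0_mult: "smooth f \<Longrightarrow> smooth g \<Longrightarrow> homogeneous 0 f \<Longrightarrow> homogeneous 0 g \<Longrightarrow> homogeneous 0 (\<lambda>x y. f x y * g x y)"
  using homogeneous_mult[of f g 0 0] by simp

lemma homogeneous_ginv: "homogeneous 0 (ginv F i j)"
proof -
  let ?D = "\<lambda>x y. gmet F 1 1 x y * gmet F 2 2 x y - gmet F 1 2 x y * gmet F 2 1 x y"
  let ?N = "\<lambda>x y. (if i = j then 1 else 0) * (gmet F 1 1 x y + gmet F 2 2 x y) - gmet F i j x y"
  have smD: "smooth ?D" by simp
  have hD: "homogeneous 0 ?D" by (intro homogeneous_diff homogeneous0_mult homogeneous_gmet) auto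
  have hDi: "homogeneous 0 (\<lambda>x y. inverse (?D x y))" using homogeneous_inverse[OF smD hD] det_gmet_nonzero by simp
  have smDi: "smooth (\<lambda>x y. inverse (?D x y))" using smooth_inverse[OF smD] det_gmet_nonzero by simp
  have hN: "homogeneous 0 ?N" by (intro homogeneous_diff homogeneous0_mult homogeneous_add homogeneous_const homogeneous_gmet) auto
  have "homogeneous 0 (\<lambda>x y. ?N x y * inverse (?D x y))" by (rule homogeneous0_mult[OF _ smDi hN hDi]) simp
  then show ?thesis
    by (rule homogeneous_cong) (use smDi in \<open>auto simp: agree_on_def ginv_eq divide_inverse\<close>)
qed

lemma smooth_m_up[simp]: "smooth (m_up F m i)"
  unfolding m_up_def by simp

lemma m_dot_y: assumes p: "(x,y) \<in> A" shows "(\<Sum>k\<in>UNIV. m k x y * y $ k) = 0"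
proof -
  have ell_y: "(\<Sum>k\<in>UNIV. y $ k * dy k F x y) = F x y"
    using euler_op_F[OF p] unfolding euler_op_def .
  have dy_ell_y: "(\<Sum>k\<in>UNIV. y $ k * dy k (dy j F) x y) = 0" for j
    using homogeneousD[OF homogeneous_dy[OF smooth_F homogeneous_F] p] by simp
  have "(\<Sum>i\<in>UNIV. \<Sum>j\<in>UNIV. gmet F i j x y * y $ i * y $ j)
     = (\<Sum>k\<in>UNIV. y $ k * dy k F x y)^2 + F x y * (\<Sum>j\<in>UNIV. y $ j * (\<Sum>k\<in>UNIV. y $ k * dy k (dy j F) x y))"
    unfolding gmet_eq_ell[OF p] by (simp add: sum_2 algebra_simps power2_eq_square)
  also have "\<dots> = (F x y)^2" unfolding ell_y dy_ell_y by simp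
  finally have "(\<Sum>i\<in>UNIV. \<Sum>j\<in>UNIV. gmet F i j x y * y $ i * y $ j) = (F x y)^2" .
  moreover have "(\<Sum>i\<in>UNIV. \<Sum>j\<in>UNIV. gmet F i j x y * y $ i * y $ j)
     = (\<Sum>k\<in>UNIV. y $ k * dy k F x y)^2 + eps * (\<Sum>k\<in>UNIV. m k x y * y $ k)^2"
    unfolding gmet_frame[OF p] by (simp add: sum_2 algebra_simps power2_eq_square)
  ultimately show ?thesis unfolding ell_y by simp
qed

lemma ell_m_det_nonzero: assumes p: "(x,y) \<in> A" shows "dy 1 F x y * m 2 x y - dy 2 F x y * m 1 x y \<noteq> 0"
proof -
  have "det (gmat F x y) = eps * (dy 1 F x y * m 2 x y - dy 2 F x y * m 1 x y)^2"
    unfolding det_gmat_eq gmet_frame[OF p] by (simp add: algebra_simps power2_eq_square)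
  then show ?thesis using det_gmat_nonzero[OF p] by auto
qed

lemma gmet_m_up: assumes p: "(x,y) \<in> A" shows "(\<Sum>k\<in>UNIV. gmet F i k x y * m_up F m k x y) = m i x y"
proof -
  have "(\<Sum>k\<in>UNIV. gmet F i k x y * m_up F m k x y) = (\<Sum>j\<in>UNIV. (\<Sum>k\<in>UNIV. gmet F i k x y * ginv F k j x y) * m j x y)"
    unfolding m_up_def by (simp add: sum_2 algebra_simps)
  also have "\<dots> = m i x y" unfolding gmet_ginv[OF p] using exhaust_2[of i] by (auto simp: sum_2)
  finally show ?thesis .
qed

lemma m_m_up: assumes p: "(x,y) \<in> A"
  shows "(\<Sum>k\<in>UNIV. m k x y * m_up F m k x y) = eps" "(\<Sum>k\<in>UNIV. dy k F x y * m_up F m k x y) = 0"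
proof -
  define a where "a = (\<Sum>k\<in>UNIV. dy k F x y * m_up F m k x y)"
  define b where "b = (\<Sum>k\<in>UNIV. m k x y * m_up F m k x y)"
  have e: "dy i F x y * a + eps * m i x y * b = m i x y" for i
  proof -
    have "m i x y = (\<Sum>k\<in>UNIV. gmet F i k x y * m_up F m k x y)" using gmet_m_up[OF p] by simp
    also have "\<dots> = dy i F x y * a + eps * m i x y * b"
      unfolding gmet_frame[OF p] a_def b_def sum_2 by (simp add: algebra_simps)
    finally show ?thesis by simp
  qed
  have "(dy 1 F x y * m 2 x y - dy 2 F x y * m 1 x y) * a
      = m 2 x y * (dy 1 F x y * a + eps * m 1 x y * b) - m 1 x y * (dy 2 F x y * a + eps * m 2 x y * b)"
    by (simp add: algebra_simps)
  also have "\<dots> = 0" unfolding e by simp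
  finally have "(dy 1 F x y * m 2 x y - dy 2 F x y * m 1 x y) * a = 0" .
  then have a0: "a = 0" using ell_m_det_nonzero[OF p] by simp
  have "m 1 x y \<noteq> 0 \<or> m 2 x y \<noteq> 0" using ell_m_det_nonzero[OF p] by auto
  then have "eps * b = 1" using e[of 1] e[of 2] a0 by (auto simp: algebra_simps)
  then have "b = eps" using eps_cases by auto
  then show "(\<Sum>k\<in>UNIV. m k x y * m_up F m k x y) = eps" "(\<Sum>k\<in>UNIV. dy k F x y * m_up F m k x y) = 0"
    using a0 unfolding a_def b_def by auto
qed

lemma covector_orthogonal_y: assumes p: "(x,y) \<in> A" and w: "(\<Sum>k\<in>UNIV. w k * y $ k) = 0"
  shows "w k = eps * (\<Sum>j\<in>UNIV. w j * m_up F m j x y) * m k x y"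
proof -
  have "(w 1 * m 2 x y - w 2 * m 1 x y) * y$1 = 0 \<and> (w 1 * m 2 x y - w 2 * m 1 x y) * y$2 = 0"
    using cramer_2_homogeneous[of "w 1" "y$1" "w 2" "y$2" "m 1 x y" "m 2 x y"] w m_dot_y[OF p] by (simp add: sum_2)
  then have c: "w 1 * m 2 x y = w 2 * m 1 x y" using y_nonzero[OF p] by (auto simp: vec_eq_iff forall_2)
  have "w k * (\<Sum>j\<in>UNIV. m j x y * m_up F m j x y) = m k x y * (\<Sum>j\<in>UNIV. w j * m_up F m j x y)"
    using exhaust_2[of k] c by (auto simp: sum_2 algebra_simps)
  then have "w k * eps = m k x y * (\<Sum>j\<in>UNIV. w j * m_up F m j x y)" using m_m_up[OF p] by simp
  then have "w k * eps * eps = eps * (\<Sum>j\<in>UNIV. w j * m_up F m j x y) * m k x y" by (simp add: algebra_simps)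
  then show ?thesis by (simp add: mult.assoc)
qed

lemma homogeneous_ell: "homogeneous 0 (dy i F)"
  using homogeneous_dy'[OF smooth_F homogeneous_F] by simp

lemma homogeneous_m: "homogeneous 0 (m i)"
proof -
  have hmm: "homogeneous 0 (\<lambda>x y. m i x y * m j x y)" for i j
  proof -
    have "homogeneous 0 (\<lambda>x y. eps * (gmet F i j x y - dy i F x y * dy j F x y))"
      by (intro homogeneous_cmult homogeneous_diff homogeneous0_mult homogeneous_gmet homogeneous_ell) auto
    then show ?thesis
      by (rule homogeneous_cong) (auto simp: agree_on_def gmet_frame algebra_simps)
  qed
  have e: "euler_op (m i) x y * m j x y + m i x y * euler_op (m j) x y = 0" if p: "(x,y) \<in> A" for i j x y
    using hmm[of i j] p euler_op_mult[of "m i" "m j" x y] unfolding homogeneous_def by simp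
  show ?thesis unfolding homogeneous_def
  proof (intro allI impI)
    fix x y assume p: "(x,y) \<in> A"
    have z: "m k x y \<noteq> 0 \<Longrightarrow> euler_op (m k) x y = 0" for k
      using e[OF p, of k k] by auto
    have "m 1 x y \<noteq> 0 \<or> m 2 x y \<noteq> 0" using ell_m_det_nonzero[OF p] by auto
    then obtain k where k: "m k x y \<noteq> 0" by blast
    have "euler_op (m i) x y * m k x y = 0" using e[OF p, of i k] z[OF k] by simp
    then show "euler_op (m i) x y = 0 * m i x y" using k by simp
  qed
qed

lemma homogeneous_m_up: "homogeneous 0 (m_up F m i)"
  unfolding m_up_def by (intro homogeneous_sum2 homogeneous0_mult homogeneous_ginv homogeneous_m) auto

definition spray_K :: "2 \<Rightarrow> fn" where
  "spray_K k = (\<lambda>x y. (\<Sum>j\<in>UNIV. y $ j * dy k (dx j F2) x y) - dx k F2 x y)"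

lemma smooth_spray_K[simp]: "smooth (spray_K k)" unfolding spray_K_def by simp

lemma Gspray_eq: "Gspray F i = (\<lambda>x y. (1/4) * (\<Sum>k\<in>UNIV. ginv F i k x y * spray_K k x y))"
  unfolding Gspray_def spray_K_def by simp

lemma smooth_Gspray[simp]: "smooth (Gspray F i)" unfolding Gspray_eq by simp
lemma smooth_Gconn[simp]: "smooth (Gconn F j i)" unfolding Gconn_def by simp

lemma homogeneous_spray_K: "homogeneous 2 (spray_K k)"
proof -
  have a: "homogeneous 2 (dx j F2)" for j using homogeneous_dx[OF smooth_F2 homogeneous_F2] .
  have b: "homogeneous 1 (dy k (dx j F2))" for j using homogeneous_dy'[OF _ a] by simp
  have "homogeneous 2 (\<lambda>x y. y $ j * dy k (dx j F2) x y)" for j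
    by (rule homogeneous_mult'[OF _ _ homogeneous_ycoord b]) auto
  then show ?thesis unfolding spray_K_def by (intro homogeneous_diff homogeneous_sum2 a) auto
qed

lemma homogeneous_Gspray: "homogeneous 2 (Gspray F i)"
  unfolding Gspray_eq
  by (intro homogeneous_cmult homogeneous_sum2 homogeneous_mult'[OF _ _ homogeneous_ginv homogeneous_spray_K]) auto

lemma gmet_Gspray: assumes p: "(x,y) \<in> A"
  shows "(\<Sum>i\<in>UNIV. gmet F l i x y * Gspray F i x y) = (1/4) * spray_K l x y"
proof -
  have "(\<Sum>i\<in>UNIV. gmet F l i x y * Gspray F i x y)
     = (1/4) * ((\<Sum>i\<in>UNIV. gmet F l i x y * ginv F i 1 x y) * spray_K 1 x y + (\<Sum>i\<in>UNIV. gmet F l i x y * ginv F i 2 x y) * spray_K 2 x y)"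
    unfolding Gspray_eq by (simp add: sum_2 algebra_simps)
  also have "\<dots> = (1/4) * spray_K l x y" unfolding gmet_ginv(1)[OF p] using exhaust_2[of l] by auto
  finally show ?thesis .
qed

lemma dy_F2: assumes p: "(x,y) \<in> A"
  shows "dy j F2 x y = 2 * (\<Sum>l\<in>UNIV. gmet F j l x y * y $ l)"
proof -
  have "(\<Sum>l\<in>UNIV. y $ l * dy l (dy j F2) x y) = 1 * dy j F2 x y"
    using homogeneousD[OF homogeneous_dy'[OF smooth_F2 homogeneous_F2] p, of 1 j] by simp
  moreover have "dy l (dy j F2) x y = 2 * gmet F j l x y" for l
    unfolding gmet_eq using dy_dy_commute[OF smooth_F2 p] by simp
  ultimately show ?thesis by (simp add: sum_2 algebra_simps)
qed

lemma Gspray_dy_F2: assumes p: "(x,y) \<in> A"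
  shows "(\<Sum>j\<in>UNIV. Gspray F j x y * dy j F2 x y) = (1/2) * (\<Sum>j\<in>UNIV. y $ j * dx j F2 x y)"
proof -
  have "(\<Sum>j\<in>UNIV. Gspray F j x y * dy j F2 x y)
      = 2 * (\<Sum>l\<in>UNIV. y $ l * (\<Sum>j\<in>UNIV. gmet F l j x y * Gspray F j x y))"
    unfolding dy_F2[OF p] using gmet_sym[OF p, of 1 2] by (simp add: sum_2 algebra_simps)
  also have "\<dots> = (1/2) * (\<Sum>l\<in>UNIV. y $ l * spray_K l x y)"
    unfolding gmet_Gspray[OF p] by (simp add: sum_2 algebra_simps)
  also have "(\<Sum>l\<in>UNIV. y $ l * spray_K l x y) = (\<Sum>j\<in>UNIV. y $ j * dx j F2 x y)"
  proof -
    have h: "(\<Sum>l\<in>UNIV. y $ l * dy l (dx j F2) x y) = 2 * dx j F2 x y" for j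
      using homogeneousD[OF homogeneous_dx[OF smooth_F2 homogeneous_F2] p] .
    have "(\<Sum>l\<in>UNIV. y $ l * spray_K l x y) = y $ 1 * (\<Sum>l\<in>UNIV. y $ l * dy l (dx 1 F2) x y)
       + y $ 2 * (\<Sum>l\<in>UNIV. y $ l * dy l (dx 2 F2) x y) - (\<Sum>j\<in>UNIV. y $ j * dx j F2 x y)"
      unfolding spray_K_def by (simp add: sum_2 algebra_simps)
    then show ?thesis unfolding h by (simp add: sum_2 algebra_simps)
  qed
  finally show ?thesis .
qed

lemma hdelta_F2: assumes p: "(x,y) \<in> A" shows "hdelta F i F2 x y = 0"
proof -
  have "agree_on A (\<lambda>x y. \<Sum>j\<in>UNIV. Gspray F j x y * dy j F2 x y) (\<lambda>x y. (1/2) * (\<Sum>j\<in>UNIV. y $ j * dx j F2 x y))"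
    unfolding agree_on_def using Gspray_dy_F2 by blast
  from dy_cong[OF this p, of i]
  have "(\<Sum>j\<in>UNIV. Gconn F j i x y * dy j F2 x y + Gspray F j x y * dy i (dy j F2) x y)
      = (1/2) * (dx i F2 x y + (\<Sum>j\<in>UNIV. y $ j * dy i (dx j F2) x y))"
    using p exhaust_2[of i] by (auto simp: Gconn_def sum_2 algebra_simps)
  moreover have "(\<Sum>j\<in>UNIV. Gspray F j x y * dy i (dy j F2) x y) = (1/2) * spray_K i x y"
  proof -
    have "(\<Sum>j\<in>UNIV. Gspray F j x y * dy i (dy j F2) x y) = 2 * (\<Sum>j\<in>UNIV. gmet F i j x y * Gspray F j x y)"
      unfolding gmet_eq by (simp add: sum_2 algebra_simps)
    then show ?thesis unfolding gmet_Gspray[OF p] by simp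
  qed
  ultimately have "(\<Sum>j\<in>UNIV. Gconn F j i x y * dy j F2 x y) = dx i F2 x y"
    unfolding spray_K_def by (simp add: sum.distrib algebra_simps)
  then show ?thesis unfolding hdelta_def by simp
qed

lemma hdelta_mult: "smooth f \<Longrightarrow> smooth g \<Longrightarrow> (x,y) \<in> A \<Longrightarrow>
   hdelta F i (\<lambda>x y. f x y * g x y) x y = hdelta F i f x y * g x y + f x y * hdelta F i g x y"
  unfolding hdelta_def by (simp add: sum_2 algebra_simps)

lemma hdelta_F: assumes p: "(x,y) \<in> A" shows "hdelta F i F x y = 0"
proof -
  have "hdelta F i F2 x y = hdelta F i (\<lambda>x y. F x y * F x y) x y"
    unfolding F2_eq hdelta_def by (simp add: power2_eq_square)
  also have "\<dots> = 2 * F x y * hdelta F i F x y" using p by (simp add: hdelta_mult)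
  finally show ?thesis using hdelta_F2[OF p] F_nonzero[OF p] by simp
qed

lemma smooth_hdelta[simp]: "smooth h \<Longrightarrow> smooth (hdelta F i h)"
  unfolding hdelta_def by simp

lemma hdelta_cong: "agree_on A f g \<Longrightarrow> (x,y) \<in> A \<Longrightarrow> hdelta F i f x y = hdelta F i g x y"
  unfolding hdelta_def using dx_cong dy_cong by simp

lemma hdelta_const: "hdelta F i (\<lambda>x y. c) x y = 0"
  unfolding hdelta_def by simp
lemma hdelta_sum2: "(\<And>k. smooth (h k)) \<Longrightarrow> (x,y) \<in> A \<Longrightarrow>
   hdelta F i (\<lambda>x y. \<Sum>k\<in>(UNIV::2 set). h k x y) x y = (\<Sum>k\<in>UNIV. hdelta F i (h k) x y)"
  unfolding hdelta_def by (simp add: sum_2 algebra_simps)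
lemma hdelta_cmult: "smooth f \<Longrightarrow> (x,y) \<in> A \<Longrightarrow> hdelta F i (\<lambda>x y. c * f x y) x y = c * hdelta F i f x y"
  using hdelta_mult[OF smooth_const, of f x y i c] by (simp add: hdelta_const)

lemma dy_hdelta: assumes "smooth h" "(x,y) \<in> A"
  shows "dy k (hdelta F i h) x y = hdelta F i (dy k h) x y - (\<Sum>j\<in>UNIV. dy k (Gconn F j i) x y * dy j h x y)"
  using assms unfolding hdelta_def
  by (simp add: sum_2 algebra_simps dx_dy_commute[OF assms] dy_dy_commute[OF assms, of k])

lemma dy3_swap12: "smooth h \<Longrightarrow> (x,y) \<in> A \<Longrightarrow> dy a (dy b (dy c h)) x y = dy b (dy a (dy c h)) x y"
  by (rule dy_dy_commute) auto
lemma dy3_swap23: "smooth h \<Longrightarrow> (x,y) \<in> A \<Longrightarrow> dy a (dy b (dy c h)) x y = dy a (dy c (dy b h)) x y"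
  by (rule dy_cong[OF agree_on_dy_dy])
lemma dy4_swap12: "smooth h \<Longrightarrow> (x,y) \<in> A \<Longrightarrow> dy a (dy b (dy c (dy d h))) x y = dy b (dy a (dy c (dy d h))) x y"
  by (rule dy_dy_commute) auto
lemma dy4_swap23: "smooth h \<Longrightarrow> (x,y) \<in> A \<Longrightarrow> dy a (dy b (dy c (dy d h))) x y = dy a (dy c (dy b (dy d h))) x y"
  by (rule dy_cong[OF agree_on_dy_dy]) auto
lemma dy4_swap34: assumes h: "smooth h" and p: "(x,y) \<in> A"
  shows "dy a (dy b (dy c (dy d h))) x y = dy a (dy b (dy d (dy c h))) x y"
proof -
  have "agree_on A (dderiv (ydir b) (dy c (dy d h))) (dderiv (ydir b) (dy d (dy c h)))"
    by (rule agree_on_dderiv) (rule agree_on_dy_dy[OF h])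
  then have "agree_on A (dy b (dy c (dy d h))) (dy b (dy d (dy c h)))" by (simp add: dy_eq_dderiv)
  then show ?thesis by (rule dy_cong[OF _ p])
qed

abbreviation G where "G \<equiv> Gspray F"
abbreviation N where "N \<equiv> Gconn F"

lemma dy_dy_Gconn_swap12: "(x,y) \<in> A \<Longrightarrow> dy k (dy j (N p i)) x y = dy j (dy k (N p i)) x y"
  unfolding Gconn_def by (rule dy3_swap12) simp

lemma euler_Gconn: assumes p: "(x,y) \<in> A" shows "(\<Sum>i\<in>UNIV. y $ i * dy j (N q i) x y) = N q j x y"
proof -
  have "(\<Sum>i\<in>UNIV. y $ i * dy j (N q i) x y) = (\<Sum>i\<in>UNIV. y $ i * dy i (dy j (G q)) x y)"
    unfolding Gconn_def using dy_dy_commute[OF smooth_Gspray p] by simp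
  also have "\<dots> = 1 * dy j (G q) x y"
    using homogeneousD[OF homogeneous_dy'[OF smooth_Gspray homogeneous_Gspray] p] by simp
  finally show ?thesis unfolding Gconn_def by simp
qed

lemma euler_dy_Gconn: assumes p: "(x,y) \<in> A" shows "(\<Sum>i\<in>UNIV. y $ i * dy k (dy j (N q i)) x y) = 0"
proof -
  have "dy k (dy j (N q i)) x y = dy i (dy k (dy j (G q))) x y" for i
    unfolding Gconn_def using dy3_swap23[OF smooth_Gspray p, of k j i] dy3_swap12[OF smooth_Gspray p, of k i j] dy3_swap23[OF smooth_Gspray p, of i k j] dy3_swap12[OF smooth_Gspray p]
    by metis
  then have "(\<Sum>i\<in>UNIV. y $ i * dy k (dy j (N q i)) x y) = (\<Sum>i\<in>UNIV. y $ i * dy i (dy k (dy j (G q))) x y)"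
    by simp
  also have "\<dots> = 0 * dy k (dy j (G q)) x y"
    using homogeneousD[OF homogeneous_dy'[OF _ homogeneous_dy'[OF smooth_Gspray homogeneous_Gspray]] p] by simp
  finally show ?thesis by simp
qed

lemma dy4_rotate: assumes p: "(x,y) \<in> A" and h: "smooth h"
  shows "dy l (dy k (dy j (dy i h))) x y = dy i (dy l (dy k (dy j h))) x y"
proof -
  have "dy l (dy k (dy j (dy i h))) x y = dy l (dy k (dy i (dy j h))) x y" using dy4_swap34[OF h p] .
  also have "\<dots> = dy l (dy i (dy k (dy j h))) x y" using dy4_swap23[OF h p] .
  also have "\<dots> = dy i (dy l (dy k (dy j h))) x y" using dy4_swap12[OF h p] .
  finally show ?thesis .
qed

lemma euler_dy_dy_Gconn: assumes p: "(x,y) \<in> A"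
  shows "(\<Sum>i\<in>UNIV. y $ i * dy l (dy k (dy j (N q i))) x y) = - dy k (dy j (N q l)) x y"
proof -
  have "dy l (dy k (dy j (N q i))) x y = dy i (dy l (dy k (dy j (G q)))) x y" for i
    unfolding Gconn_def using dy4_rotate[OF p smooth_Gspray] .
  then have "(\<Sum>i\<in>UNIV. y $ i * dy l (dy k (dy j (N q i))) x y) = (\<Sum>i\<in>UNIV. y $ i * dy i (dy l (dy k (dy j (G q)))) x y)"
    by simp
  also have "\<dots> = (-1) * dy l (dy k (dy j (G q))) x y"
    using homogeneousD[OF homogeneous_dy'[OF _ homogeneous_dy'[OF _ homogeneous_dy'[OF smooth_Gspray homogeneous_Gspray]]] p] by simp
  also have "dy l (dy k (dy j (G q))) x y = dy k (dy j (N q l)) x y"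
    unfolding Gconn_def using dy3_swap12[OF smooth_Gspray p, of l k j] dy3_swap23[OF smooth_Gspray p, of k l j] by simp
  finally show ?thesis by simp
qed

text \<open>The Berwald horizontal derivative of the metric: the term \<open>y\<^sub>q G\<^sup>q\<^sub>i\<^sub>j\<^sub>k\<close> on
  the right is \<open>-2 L\<^sub>i\<^sub>j\<^sub>k\<close>, L the Landsberg tensor.\<close>
lemma hdelta_gmet: assumes p: "(x,y) \<in> A"
  shows "hdelta F i (gmet F j k) x y = (\<Sum>q\<in>UNIV. dy k (N q i) x y * gmet F q j x y
      + dy j (N q i) x y * gmet F q k x y + dy k (dy j (N q i)) x y * ((1/2) * dy q F2 x y))"
proof -
  let ?W = "\<lambda>x y. hdelta F i (dy j F2) x y - (\<Sum>q\<in>UNIV. dy j (N q i) x y * dy q F2 x y)"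
  have W0: "?W x y = 0" if "(x,y) \<in> A" for x y
  proof -
    have "dy j (hdelta F i F2) x y = 0" by (rule dy_zero[OF hdelta_F2 that])
    then show ?thesis using dy_hdelta[OF smooth_F2 that, of j i] by simp
  qed
  have "dy k ?W x y = 0" by (rule dy_zero[OF W0 p])
  then have e1: "dy k (hdelta F i (dy j F2)) x y = (\<Sum>q\<in>UNIV. dy k (dy j (N q i)) x y * dy q F2 x y + dy j (N q i) x y * dy k (dy q F2) x y)"
    using p by (simp add: sum_2)
  have e2: "dy k (hdelta F i (dy j F2)) x y = hdelta F i (dy k (dy j F2)) x y - (\<Sum>q\<in>UNIV. dy k (N q i) x y * dy q (dy j F2) x y)"
    by (rule dy_hdelta) (use p in auto)
  have e3: "hdelta F i (gmet F j k) x y = (1/2) * hdelta F i (dy k (dy j F2)) x y"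
  proof -
    have "hdelta F i (gmet F j k) x y = (1/2) * hdelta F i (dy j (dy k F2)) x y"
      unfolding gmet_eq using hdelta_cmult[of "dy j (dy k F2)" x y i "1/2"] p by simp
    also have "hdelta F i (dy j (dy k F2)) x y = hdelta F i (dy k (dy j F2)) x y"
      by (rule hdelta_cong[OF agree_on_dy_dy[OF smooth_F2] p])
    finally show ?thesis .
  qed
  have g1: "dy q (dy j F2) x y = 2 * gmet F q j x y" for q unfolding gmet_eq by simp
  have g2: "dy k (dy q F2) x y = 2 * gmet F q k x y" for q unfolding gmet_eq using gmet_sym[OF p, of k q] gmet_eq by simp
  show ?thesis using e1 e2 e3 unfolding g1 g2 by (simp add: sum_2 algebra_simps)
qed

abbreviation mu where "mu \<equiv> m_up F m"

definition m_hcov_m :: "2 \<Rightarrow> fn" where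
  "m_hcov_m i = (\<lambda>x y. \<Sum>l\<in>UNIV. m l x y * (hdelta F i (mu l) x y + (\<Sum>q\<in>UNIV. dy q (N l i) x y * mu q x y)))"

definition landsberg_mm :: "2 \<Rightarrow> fn" where
  "landsberg_mm i = (\<lambda>x y. \<Sum>k\<in>UNIV. \<Sum>l\<in>UNIV. mu k x y * mu l x y * (\<Sum>q\<in>UNIV. dy k (dy l (N q i)) x y * ((1/2) * dy q F2 x y)))"

text \<open>\<^const>\<open>m_hcov_m\<close> is \<open>m\<^sub>l m\<^sup>l\<^sub>|\<^sub>i\<close> for the Berwald horizontal covariant derivative, and
  \<^const>\<open>landsberg_mm\<close> is \<open>-2 L(m\<^sup>#, m\<^sup>#, \<partial>\<^sub>i)\<close>.\<close>

lemma m_hcov_m_eq: assumes p: "(x,y) \<in> A" shows "m_hcov_m i x y = - (1/2) * landsberg_mm i x y"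
proof -
  \<comment> \<open>differentiate \<open>g(m\<^sup>#, m\<^sup>#) = eps\<close> horizontally\<close>
  let ?S = "\<lambda>x y. \<Sum>k\<in>UNIV. \<Sum>l\<in>UNIV. gmet F k l x y * mu k x y * mu l x y"
  have S: "?S x y = eps" if "(x,y) \<in> A" for x y
  proof -
    have "?S x y = (\<Sum>k\<in>UNIV. mu k x y * (\<Sum>l\<in>UNIV. gmet F k l x y * mu l x y))"
      by (simp add: sum_2 algebra_simps)
    also have "\<dots> = eps" unfolding gmet_m_up[OF that] using m_m_up(1)[OF that] by (simp add: mult.commute)
    finally show ?thesis .
  qed
  have "hdelta F i ?S x y = hdelta F i (\<lambda>x y. eps) x y"
    by (rule hdelta_cong[OF _ p]) (simp add: agree_on_def S)
  then have z: "hdelta F i ?S x y = 0" by (simp add: hdelta_const)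
  have "hdelta F i ?S x y = (\<Sum>k\<in>UNIV. \<Sum>l\<in>UNIV. hdelta F i (gmet F k l) x y * mu k x y * mu l x y
      + gmet F k l x y * hdelta F i (mu k) x y * mu l x y + gmet F k l x y * mu k x y * hdelta F i (mu l) x y)"
    using p by (simp add: hdelta_sum2 hdelta_mult, simp add: sum_2 algebra_simps)
  also have "\<dots> = (\<Sum>k\<in>UNIV. \<Sum>l\<in>UNIV. hdelta F i (gmet F k l) x y * mu k x y * mu l x y)
      + 2 * (\<Sum>l\<in>UNIV. m l x y * hdelta F i (mu l) x y)"
    unfolding gmet_m_up[OF p, symmetric] using gmet_sym[OF p, of 1 2] by (simp add: sum_2 algebra_simps)
  also have "(\<Sum>k\<in>UNIV. \<Sum>l\<in>UNIV. hdelta F i (gmet F k l) x y * mu k x y * mu l x y)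
     = 2 * (\<Sum>l\<in>UNIV. m l x y * (\<Sum>q\<in>UNIV. dy q (N l i) x y * mu q x y)) + landsberg_mm i x y"
    unfolding hdelta_gmet[OF p] landsberg_mm_def gmet_m_up[OF p, symmetric]
    using gmet_sym[OF p, of 1 2] dy_dy_Gconn_swap12[OF p, of 2 1]
    by (simp add: sum_2 algebra_simps)
  finally have "0 = 2 * m_hcov_m i x y + landsberg_mm i x y" using z unfolding m_hcov_m_def by (simp add: sum_2 algebra_simps)
  then show ?thesis by simp
qed

lemma landsberg_mm_y: assumes p: "(x,y) \<in> A" shows "(\<Sum>i\<in>UNIV. y $ i * landsberg_mm i x y) = 0"
proof -
  have "(\<Sum>i\<in>UNIV. y $ i * landsberg_mm i x y) = (\<Sum>k\<in>UNIV. \<Sum>l\<in>UNIV. mu k x y * mu l x y *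
     (\<Sum>q\<in>UNIV. (\<Sum>i\<in>UNIV. y $ i * dy k (dy l (N q i)) x y) * ((1/2) * dy q F2 x y)))"
    unfolding landsberg_mm_def by (simp add: sum_2 algebra_simps)
  also have "\<dots> = 0" by (simp add: euler_dy_Gconn[OF p])
  finally show ?thesis .
qed

lemma m_hcov_m_y: assumes p: "(x,y) \<in> A" shows "(\<Sum>i\<in>UNIV. y $ i * m_hcov_m i x y) = 0"
  using landsberg_mm_y[OF p] m_hcov_m_eq[OF p] by (simp add: sum_2 algebra_simps)

lemma dy_gmet_eq: "(x,y) \<in> A \<Longrightarrow> dy l (gmet F j k) x y = (1/2) * dy l (dy j (dy k F2)) x y"
  unfolding gmet_eq by simp

lemma dy_gmet_swap12: "(x,y) \<in> A \<Longrightarrow> dy l (gmet F j k) x y = dy j (gmet F l k) x y"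
  unfolding dy_gmet_eq using dy3_swap12[OF smooth_F2] by metis
lemma dy_gmet_swap23: "(x,y) \<in> A \<Longrightarrow> dy l (gmet F j k) x y = dy l (gmet F k j) x y"
  unfolding dy_gmet_eq using dy3_swap23[OF smooth_F2] by metis

lemma cartan_eq_dy_gmet: "(x,y) \<in> A \<Longrightarrow> cartan F l j k x y = (1/2) * dy l (gmet F j k) x y"
  unfolding dy_gmet_eq cartan_def sqF_def by simp

lemma hdelta_dy_gmet: assumes p: "(x,y) \<in> A"
  shows "hdelta F i (dy l (gmet F j k)) x y = (\<Sum>q\<in>UNIV.
      dy l (dy k (N q i)) x y * gmet F q j x y + dy k (N q i) x y * dy l (gmet F q j) x y
    + dy l (dy j (N q i)) x y * gmet F q k x y + dy j (N q i) x y * dy l (gmet F q k) x y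
    + dy l (dy k (dy j (N q i))) x y * ((1/2) * dy q F2 x y)
    + dy k (dy j (N q i)) x y * ((1/2) * dy l (dy q F2) x y)
    + dy l (N q i) x y * dy q (gmet F j k) x y)"
proof -
  have c: "hdelta F i (dy l (gmet F j k)) x y = dy l (hdelta F i (gmet F j k)) x y + (\<Sum>q\<in>UNIV. dy l (N q i) x y * dy q (gmet F j k) x y)"
    using dy_hdelta[OF smooth_gmet p, of l i j k] by simp
  have e: "agree_on A (hdelta F i (gmet F j k)) (\<lambda>x y. \<Sum>q\<in>UNIV. dy k (N q i) x y * gmet F q j x y
      + dy j (N q i) x y * gmet F q k x y + dy k (dy j (N q i)) x y * ((1/2) * dy q F2 x y))"
    unfolding agree_on_def using hdelta_gmet by blast
  have "dy l (hdelta F i (gmet F j k)) x y = dy l (\<lambda>x y. \<Sum>q\<in>UNIV. dy k (N q i) x y * gmet F q j x y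
      + dy j (N q i) x y * gmet F q k x y + dy k (dy j (N q i)) x y * ((1/2) * dy q F2 x y)) x y"
    by (rule dy_cong[OF e p])
  also have "\<dots> = (\<Sum>q\<in>UNIV.
      dy l (dy k (N q i)) x y * gmet F q j x y + dy k (N q i) x y * dy l (gmet F q j) x y
    + dy l (dy j (N q i)) x y * gmet F q k x y + dy j (N q i) x y * dy l (gmet F q k) x y
    + dy l (dy k (dy j (N q i))) x y * ((1/2) * dy q F2 x y)
    + dy k (dy j (N q i)) x y * ((1/2) * dy l (dy q F2) x y))"
    using p by (simp, simp add: sum_2 algebra_simps add_divide_distrib)
  finally show ?thesis using c by (simp add: sum_2 algebra_simps)
qed

lemma y_hdelta_dy_gmet: assumes p: "(x,y) \<in> A"
  shows "(\<Sum>i\<in>UNIV. y $ i * hdelta F i (dy l (gmet F j k)) x y) =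
     (\<Sum>q\<in>UNIV. N q k x y * dy l (gmet F q j) x y + N q j x y * dy l (gmet F q k) x y + N q l x y * dy q (gmet F j k) x y)
     - (\<Sum>q\<in>UNIV. dy k (dy j (N q l)) x y * ((1/2) * dy q F2 x y))"
proof -
  have "(\<Sum>i\<in>UNIV. y $ i * hdelta F i (dy l (gmet F j k)) x y) = (\<Sum>q\<in>UNIV.
      (\<Sum>i\<in>UNIV. y $ i * dy l (dy k (N q i)) x y) * gmet F q j x y + (\<Sum>i\<in>UNIV. y $ i * dy k (N q i) x y) * dy l (gmet F q j) x y
    + (\<Sum>i\<in>UNIV. y $ i * dy l (dy j (N q i)) x y) * gmet F q k x y + (\<Sum>i\<in>UNIV. y $ i * dy j (N q i) x y) * dy l (gmet F q k) x y
    + (\<Sum>i\<in>UNIV. y $ i * dy l (dy k (dy j (N q i))) x y) * ((1/2) * dy q F2 x y)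
    + (\<Sum>i\<in>UNIV. y $ i * dy k (dy j (N q i)) x y) * ((1/2) * dy l (dy q F2) x y)
    + (\<Sum>i\<in>UNIV. y $ i * dy l (N q i) x y) * dy q (gmet F j k) x y)"
    unfolding hdelta_dy_gmet[OF p] by (simp add: sum_2 algebra_simps)
  also have "\<dots> = (\<Sum>q\<in>UNIV. N q k x y * dy l (gmet F q j) x y + N q j x y * dy l (gmet F q k) x y
      - dy k (dy j (N q l)) x y * ((1/2) * dy q F2 x y) + N q l x y * dy q (gmet F j k) x y)"
    by (simp only: euler_Gconn[OF p] euler_dy_Gconn[OF p] euler_dy_dy_Gconn[OF p]) simp
  finally show ?thesis by (simp add: sum_2 algebra_simps)
qed

end

locale landsberg_frame = finsler_frame +
  fixes I :: fn
  assumes main_scalar: "\<And>x y i j k. (x,y) \<in> A \<Longrightarrow> F x y * cartan F i j k x y = I x y * m i x y * m j x y * m k x y"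
    and landsberg_I: "\<And>x y. (x,y) \<in> A \<Longrightarrow> hd1 F I x y = 0"
begin

lemma F_dy_gmet_mm: assumes p: "(x,y) \<in> A"
  shows "F x y * (\<Sum>j\<in>UNIV. \<Sum>l\<in>UNIV. dy q (gmet F j l) x y * mu j x y * mu l x y) = 2 * I x y * m q x y"
proof -
  have "F x y * dy q (gmet F j l) x y = 2 * I x y * m q x y * m j x y * m l x y" for j l
    using main_scalar[OF p, of q j l] cartan_eq_dy_gmet[OF p] by simp
  note h = this
  have "F x y * (\<Sum>j\<in>UNIV. \<Sum>l\<in>UNIV. dy q (gmet F j l) x y * mu j x y * mu l x y)
     = (\<Sum>j\<in>UNIV. \<Sum>l\<in>UNIV. (F x y * dy q (gmet F j l) x y) * mu j x y * mu l x y)"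
    by (simp add: sum_2 algebra_simps)
  also have "\<dots> = (\<Sum>j\<in>UNIV. \<Sum>l\<in>UNIV. (2 * I x y * m q x y * m j x y * m l x y) * mu j x y * mu l x y)"
    by (simp only: h)
  also have "\<dots> = 2 * I x y * m q x y * (\<Sum>j\<in>UNIV. m j x y * mu j x y) * (\<Sum>l\<in>UNIV. m l x y * mu l x y)"
    by (simp add: sum_2 algebra_simps)
  finally have "F x y * (\<Sum>j\<in>UNIV. \<Sum>l\<in>UNIV. dy q (gmet F j l) x y * mu j x y * mu l x y)
     = 2 * I x y * m q x y * (\<Sum>j\<in>UNIV. m j x y * mu j x y) * (\<Sum>l\<in>UNIV. m l x y * mu l x y)" .
  then show ?thesis using m_m_up(1)[OF p] by simp
qed

definition dy_gmet_mmm :: fn where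
  "dy_gmet_mmm = (\<lambda>x y. \<Sum>j\<in>UNIV. \<Sum>k\<in>UNIV. \<Sum>l\<in>UNIV. dy l (gmet F j k) x y * mu j x y * mu k x y * mu l x y)"

lemma smooth_dy_gmet_mmm[simp]: "smooth dy_gmet_mmm" unfolding dy_gmet_mmm_def by simp

lemma F_dy_gmet_mmm: assumes p: "(x,y) \<in> A" shows "F x y * dy_gmet_mmm x y = 2 * eps * I x y"
proof -
  have "F x y * dy_gmet_mmm x y = (\<Sum>l\<in>UNIV. mu l x y * (F x y * (\<Sum>j\<in>UNIV. \<Sum>k\<in>UNIV. dy l (gmet F j k) x y * mu j x y * mu k x y)))"
    unfolding dy_gmet_mmm_def by (simp add: sum_2 algebra_simps)
  also have "\<dots> = 2 * I x y * (\<Sum>l\<in>UNIV. m l x y * mu l x y)" unfolding F_dy_gmet_mm[OF p] by (simp add: sum_2 algebra_simps)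
  finally show ?thesis using m_m_up(1)[OF p] by simp
qed

text \<open>The only place where the Landsberg condition enters.\<close>
lemma y_hdelta_dy_gmet_mmm: assumes p: "(x,y) \<in> A" shows "(\<Sum>i\<in>UNIV. y $ i * hdelta F i dy_gmet_mmm x y) = 0"
proof -
  have I_eq: "agree_on A I (\<lambda>x y. (eps / 2) * (F x y * dy_gmet_mmm x y))"
    unfolding agree_on_def using F_dy_gmet_mmm by (simp add: mult.assoc[symmetric])
  have "hdelta F i I x y = (eps / 2) * (F x y * hdelta F i dy_gmet_mmm x y)" for i
  proof -
    have "hdelta F i I x y = hdelta F i (\<lambda>x y. (eps / 2) * (F x y * dy_gmet_mmm x y)) x y"
      by (rule hdelta_cong[OF I_eq p])
    also have "\<dots> = (eps / 2) * hdelta F i (\<lambda>x y. F x y * dy_gmet_mmm x y) x y"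
      by (rule hdelta_cmult) (simp_all add: p)
    also have "\<dots> = (eps / 2) * (F x y * hdelta F i dy_gmet_mmm x y)"
      using p by (simp add: hdelta_mult hdelta_F)
    finally show ?thesis .
  qed
  note hI = this
  have "0 = (\<Sum>i\<in>UNIV. ell_up F i x y * hdelta F i I x y)"
    using landsberg_I[OF p] unfolding hd1_def by simp
  also have "\<dots> = (\<Sum>i\<in>UNIV. (y $ i / F x y) * ((eps / 2) * (F x y * hdelta F i dy_gmet_mmm x y)))"
    unfolding ell_up_def hI ..
  also have "\<dots> = (eps / 2) * (\<Sum>i\<in>UNIV. y $ i * hdelta F i dy_gmet_mmm x y)"
    using F_nonzero[OF p] by (simp add: sum_2 field_simps)
  finally show ?thesis by simp
qed

definition y_hdelta_m_up :: "2 \<Rightarrow> fn" where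
  "y_hdelta_m_up q = (\<lambda>x y. \<Sum>i\<in>UNIV. y $ i * hdelta F i (mu q) x y)"

definition dy_gmet_mm :: "2 \<Rightarrow> fn" where
  "dy_gmet_mm q = (\<lambda>x y. \<Sum>j\<in>UNIV. \<Sum>l\<in>UNIV. dy q (gmet F j l) x y * mu j x y * mu l x y)"

lemma dy_gmet_normal: assumes p: "(x,y) \<in> A"
  shows "dy 1 (gmet F 2 1) x y = dy 1 (gmet F 1 2) x y"
    "dy 2 (gmet F 1 1) x y = dy 1 (gmet F 1 2) x y"
    "dy 2 (gmet F 1 2) x y = dy 1 (gmet F 2 2) x y"
    "dy 2 (gmet F 2 1) x y = dy 1 (gmet F 2 2) x y"
  using dy_gmet_swap12[OF p] dy_gmet_swap23[OF p] by metis+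

lemma y_hdelta_dy_gmet_mmm_expand: assumes p: "(x,y) \<in> A"
  shows "(\<Sum>i\<in>UNIV. y $ i * hdelta F i dy_gmet_mmm x y) =
    (\<Sum>j\<in>UNIV. \<Sum>k\<in>UNIV. \<Sum>l\<in>UNIV. (\<Sum>i\<in>UNIV. y $ i * hdelta F i (dy l (gmet F j k)) x y) * mu j x y * mu k x y * mu l x y
      + dy l (gmet F j k) x y * (y_hdelta_m_up j x y * mu k x y * mu l x y + mu j x y * y_hdelta_m_up k x y * mu l x y + mu j x y * mu k x y * y_hdelta_m_up l x y))"
proof -
  have "hdelta F i dy_gmet_mmm x y = (\<Sum>j\<in>UNIV. \<Sum>k\<in>UNIV. \<Sum>l\<in>UNIV. hdelta F i (dy l (gmet F j k)) x y * mu j x y * mu k x y * mu l x y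
      + dy l (gmet F j k) x y * (hdelta F i (mu j) x y * mu k x y * mu l x y + mu j x y * hdelta F i (mu k) x y * mu l x y + mu j x y * mu k x y * hdelta F i (mu l) x y))" for i
    unfolding dy_gmet_mmm_def using p by (simp add: hdelta_sum2 hdelta_mult, simp add: sum_2 algebra_simps)
  then show ?thesis unfolding y_hdelta_m_up_def by (simp add: sum_2 algebra_simps)
qed

lemma y_hdelta_dy_gmet_mmm_eq: assumes p: "(x,y) \<in> A"
  shows "(\<Sum>i\<in>UNIV. y $ i * hdelta F i dy_gmet_mmm x y) =
     3 * (\<Sum>q\<in>UNIV. dy_gmet_mm q x y * ((\<Sum>k\<in>UNIV. N q k x y * mu k x y) + y_hdelta_m_up q x y)) - (\<Sum>l\<in>UNIV. mu l x y * landsberg_mm l x y)"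
  unfolding y_hdelta_dy_gmet_mmm_expand[OF p] y_hdelta_dy_gmet[OF p] dy_gmet_mm_def landsberg_mm_def
  using dy_gmet_normal[OF p] by (simp add: sum_2 algebra_simps)

lemma m_hcov_m_y_expand: assumes p: "(x,y) \<in> A"
  shows "(\<Sum>i\<in>UNIV. y $ i * m_hcov_m i x y) = (\<Sum>l\<in>UNIV. m l x y * (y_hdelta_m_up l x y + (\<Sum>q\<in>UNIV. N l q x y * mu q x y)))"
proof -
  have "(\<Sum>i\<in>UNIV. y $ i * m_hcov_m i x y) = (\<Sum>l\<in>UNIV. m l x y * (y_hdelta_m_up l x y + (\<Sum>q\<in>UNIV. (\<Sum>i\<in>UNIV. y $ i * dy q (N l i) x y) * mu q x y)))"
    unfolding m_hcov_m_def y_hdelta_m_up_def by (simp add: sum_2 algebra_simps)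
  then show ?thesis by (simp only: euler_Gconn[OF p])
qed

lemma m_up_landsberg_mm: assumes p: "(x,y) \<in> A" shows "(\<Sum>l\<in>UNIV. mu l x y * landsberg_mm l x y) = 0"
proof -
  have "F x y * (\<Sum>q\<in>UNIV. dy_gmet_mm q x y * ((\<Sum>k\<in>UNIV. N q k x y * mu k x y) + y_hdelta_m_up q x y))
      = (\<Sum>q\<in>UNIV. (F x y * dy_gmet_mm q x y) * ((\<Sum>k\<in>UNIV. N q k x y * mu k x y) + y_hdelta_m_up q x y))"
    by (simp add: sum_2 algebra_simps)
  also have "\<dots> = 2 * I x y * (\<Sum>q\<in>UNIV. m q x y * ((\<Sum>k\<in>UNIV. N q k x y * mu k x y) + y_hdelta_m_up q x y))"
    unfolding dy_gmet_mm_def F_dy_gmet_mm[OF p] by (simp add: sum_2 algebra_simps)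
  also have "\<dots> = 2 * I x y * (\<Sum>i\<in>UNIV. y $ i * m_hcov_m i x y)"
    unfolding m_hcov_m_y_expand[OF p] by (simp add: sum_2 algebra_simps)
  also have "\<dots> = 0" using m_hcov_m_y[OF p] by simp
  finally have z: "F x y * (\<Sum>q\<in>UNIV. dy_gmet_mm q x y * ((\<Sum>k\<in>UNIV. N q k x y * mu k x y) + y_hdelta_m_up q x y)) = 0" .
  then have S0: "(\<Sum>q\<in>UNIV. dy_gmet_mm q x y * ((\<Sum>k\<in>UNIV. N q k x y * mu k x y) + y_hdelta_m_up q x y)) = 0"
    using F_nonzero[OF p] by simp
  show ?thesis using y_hdelta_dy_gmet_mmm[OF p] unfolding y_hdelta_dy_gmet_mmm_eq[OF p] S0 by simp
qed

lemma landsberg_mm_eq_0: assumes p: "(x,y) \<in> A" shows "landsberg_mm i x y = 0"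
  using covector_orthogonal_y[OF p, of "\<lambda>i. landsberg_mm i x y" i] landsberg_mm_y[OF p] m_up_landsberg_mm[OF p] by (simp add: mult.commute)

lemma m_hcov_m_eq_0: assumes p: "(x,y) \<in> A" shows "m_hcov_m i x y = 0"
  using m_hcov_m_eq[OF p] landsberg_mm_eq_0[OF p] by simp

lemma horiz_const_vd2:
  assumes f: "smooth f" "homogeneous 0 f" and hc: "horiz_const A F f"
  shows "horiz_const A F (vd2 F eps m f)"
  unfolding horiz_const_def
proof (intro ballI allI, clarify)
  fix x y i assume p: "(x,y) \<in> A"
  define c where "c = (\<Sum>j\<in>UNIV. dy j f x y * mu j x y)"
  have hk: "dy k f x y = eps * c * m k x y" for k
    using covector_orthogonal_y[OF p, of "\<lambda>k. dy k f x y" k] homogeneousD[OF f(2) p] unfolding c_def by (simp add: mult.commute)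
  have hf0: "hdelta F i f x y = 0" if "(x,y) \<in> A" for x y using hc that unfolding horiz_const_def by blast
  have dk: "hdelta F i (dy k f) x y = (\<Sum>j\<in>UNIV. dy k (N j i) x y * dy j f x y)" for k
    using dy_hdelta[OF f(1) p, of k i] dy_zero[OF hf0 p, where i=k] by simp
  have "hdelta F i (vd2 F eps m f) x y
     = hdelta F i (\<lambda>x y. eps * (F x y * (\<Sum>k\<in>UNIV. mu k x y * dy k f x y))) x y"
    unfolding vd2_def by (simp add: mult.assoc)
  also have "\<dots> = eps * hdelta F i (\<lambda>x y. F x y * (\<Sum>k\<in>UNIV. mu k x y * dy k f x y)) x y"
    by (rule hdelta_cmult) (use p f in simp_all)
  also have "\<dots> = eps * (F x y * (\<Sum>k\<in>UNIV. hdelta F i (mu k) x y * dy k f x y + mu k x y * hdelta F i (dy k f) x y))"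
    using p f by (simp add: hdelta_mult hdelta_F hdelta_sum2)
  also have "\<dots> = eps * (F x y * (\<Sum>k\<in>UNIV. hdelta F i (mu k) x y * dy k f x y + mu k x y * (\<Sum>j\<in>UNIV. dy k (N j i) x y * dy j f x y)))"
    unfolding dk ..
  also have "\<dots> = eps * (F x y * (\<Sum>k\<in>UNIV. hdelta F i (mu k) x y * (eps * c * m k x y) + mu k x y * (\<Sum>j\<in>UNIV. dy k (N j i) x y * (eps * c * m j x y))))"
    unfolding hk ..
  also have "\<dots> = (eps * eps) * F x y * c * m_hcov_m i x y"
    unfolding m_hcov_m_def by (simp add: sum_2 algebra_simps del: eps_times_eps)
  also have "\<dots> = 0" using m_hcov_m_eq_0[OF p] by simp
  finally show "hdelta F i (vd2 F eps m f) x y = 0" .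
qed

lemma smooth_vd2: "smooth f \<Longrightarrow> smooth (vd2 F eps m f)"
  unfolding vd2_def by simp

lemma homogeneous_vd2: assumes f: "smooth f" "homogeneous 0 f" shows "homogeneous 0 (vd2 F eps m f)"
proof -
  have "homogeneous (-1) (dy k f)" for k using homogeneous_dy'[OF f] by simp
  then have "homogeneous (-1) (\<lambda>x y. \<Sum>k\<in>UNIV. mu k x y * dy k f x y)"
    using f by (intro homogeneous_sum2 homogeneous_mult'[OF _ _ homogeneous_m_up]) auto
  then have "homogeneous 0 (\<lambda>x y. eps * (F x y * (\<Sum>k\<in>UNIV. mu k x y * dy k f x y)))"
    using f by (intro homogeneous_cmult homogeneous_mult'[OF _ _ homogeneous_F]) auto
  then show ?thesis by (rule homogeneous_cong) (use f in \<open>auto simp: agree_on_def vd2_def mult.assoc\<close>)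
qed

end

lemma landsberg_frameI:
  assumes "conic_pseudo_finsler_surface A F" "berwald_frame A F eps m"
    "is_main_scalar A F m I" "landsberg A F I"
  shows "landsberg_frame A F eps m I"
proof -
  have "conic_subbundle A" "smooth_on_TM A F" "homog 1 A F" "\<forall>(x,y)\<in>A. det (gmat F x y) \<noteq> 0"
    using assms(1) unfolding conic_pseudo_finsler_surface_def by auto
  then show ?thesis
    by unfold_locales
      (use assms(2-4) in \<open>auto simp: conic_subbundle_def berwald_frame_def ell_low_def
          is_main_scalar_def landsberg_def\<close>)
qed

theorem lemma2p4:
  fixes A :: "((real^2) \<times> (real^2)) set" and F f I :: fn and m :: "2 \<Rightarrow> fn" and eps :: real
  assumes "conic_pseudo_finsler_surface A F"
    and "berwald_frame A F eps m"
    and "is_main_scalar A F m I"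
    and "landsberg A F I"
    and "smooth_on_TM A f" and "homog 0 A f"
    and "horiz_const A F f"
  shows "horiz_const A F (vd2 F eps m f) \<and> horiz_const A F (vd2 F eps m (vd2 F eps m f))"
proof -
  interpret landsberg_frame A F eps m I
    using landsberg_frameI[OF assms(1-4)] .
  have f: "homogeneous 0 f" using homogeneous_if_homog0[OF assms(5,6)] .
  have "horiz_const A F (vd2 F eps m f)"
    using horiz_const_vd2[OF assms(5) f assms(7)] .
  moreover have "horiz_const A F (vd2 F eps m (vd2 F eps m f))"
    using horiz_const_vd2[OF smooth_vd2[OF assms(5)] homogeneous_vd2[OF assms(5) f] calculation] .
  ultimately show ?thesis ..
qed

end
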